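(* A sub-space-time $(M,D,g,T)$ is chronological if and only if, for every horizontal timelike future directed curve $\gamma\colon I\to M$, the pullback $\gamma^{-1}(\mathscr{A})=\{\gamma^{-1}(A):A\in\mathscr{A}\}$ of the Alexandrov topology $\mathscr{A}$ to the parameter interval $I\subset\mathbb{R}$ is finer than the standard (subspace) topology on $I$.
   Context: A sub-space-time is a quadruple $(M,D,g,T)$ where $M$ is a connected smooth manifold, $D$ is a smooth bracket-generating distribution on $M$ of rank $k$ with $2\le k<\dim M$, $g$ is a smoothly varying non-degenerate symmetric bilinear form on the fibres $D_p$ of index $1$, and $T$ is a globally defined smooth horizontal vector field with $g(T,T)<0$. A horizontal curve is an absolutely continuous curve with $\dot\gamma\in D$ a.e. and $\dot\gamma$ locally square integrable w.r.t. an auxiliary Riemannian metric; it is timelike future directed (t.f.d.) if a.e. $g(\dot\gamma,\dot\gamma)<0$ and $g(T,\dot\gamma)<0$. $p\ll q$ means there is a horizontal t.f.d. curve from $p$ to $q$; $I^+(p)=\{q:p\ll q\}$, $I^-(p)=\{q:q\ll p\}$. The Alexandrov topology $\mathscr{A}$ is generated by the subbasis $\{I^+(p),I^-(p):p\in M\}$. $M$ is chronological if there is no $p\in M$ with $p\ll p$. *)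

theory Defs
  imports "HOL-Analysis.Analysis"
begin

text \<open>C^k on an open set, via iterated directional (Frechet) derivatives.
  For finite-dimensional domains this is the usual notion of C^k.\<close>

primrec Ck_on :: "nat \<Rightarrow> 'e::euclidean_space set \<Rightarrow> ('e \<Rightarrow> 'f::real_normed_vector) \<Rightarrow> bool" where
  "Ck_on 0 S f = continuous_on S f"
| "Ck_on (Suc k) S f =
     ((\<forall>x\<in>S. f differentiable (at x)) \<and>
      (\<forall>v. Ck_on k S (\<lambda>x. frechet_derivative f (at x) v)))"

definition smooth_on :: "'e::euclidean_space set \<Rightarrow> ('e \<Rightarrow> 'f::real_normed_vector) \<Rightarrow> bool" where
  "smooth_on S f \<longleftrightarrow> open S \<and> (\<forall>k. Ck_on k S f)"

type_synonym ('m, 'e) chart = "'m set \<times> ('m \<Rightarrow> 'e)"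

definition chart_inv :: "('m, 'e) chart \<Rightarrow> 'e \<Rightarrow> 'm" where
  "chart_inv c = inv_into (fst c) (snd c)"

definition transition :: "('m, 'e) chart \<Rightarrow> ('m, 'e) chart \<Rightarrow> 'e \<Rightarrow> 'e" where
  "transition c c' = snd c' \<circ> chart_inv c"

definition smooth_atlas ::
  "('m::topological_space, 'e::euclidean_space) chart set \<Rightarrow> bool" where
  "smooth_atlas A \<longleftrightarrow>
     (\<Union>(fst ` A) = UNIV) \<and>
     (\<forall>c\<in>A. open (fst c) \<and> inj_on (snd c) (fst c) \<and> continuous_on (fst c) (snd c) \<and>
             open (snd c ` fst c) \<and> continuous_on (snd c ` fst c) (chart_inv c)) \<and>
     (\<forall>c\<in>A. \<forall>c'\<in>A. smooth_on (snd c ` (fst c \<inter> fst c')) (transition c c'))"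

definition chart_change :: "('m, 'e::euclidean_space) chart \<Rightarrow> ('m, 'e) chart \<Rightarrow> 'm \<Rightarrow> 'e \<Rightarrow> 'e" where
  "chart_change c c' p = frechet_derivative (transition c c') (at (snd c p))"

text \<open>
  D c p   : the fibre D_p, written in the coordinates of chart c (a subspace of 'e)
  g c p   : the bilinear form g_p on D_p, written in the coordinates of chart c
  T c p   : the vector T(p), written in the coordinates of chart c
  All three are required to transform correctly under chart changes, so they
  represent chart-independent objects on M.\<close>

definition horizontal_field_on ::
  "('m, 'e::euclidean_space) chart \<Rightarrow> (('m, 'e) chart \<Rightarrow> 'm \<Rightarrow> 'e set) \<Rightarrow> 'e set \<Rightarrow> ('e \<Rightarrow> 'e) \<Rightarrow> bool" where
  "horizontal_field_on c D W X \<longleftrightarrow>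
     W \<subseteq> snd c ` fst c \<and> smooth_on W X \<and> (\<forall>x\<in>W. X x \<in> D c (chart_inv c x))"

text \<open>Iterated Lie brackets (in coordinates) of smooth horizontal local vector fields.\<close>
inductive_set bracket_fields ::
  "('m, 'e::euclidean_space) chart \<Rightarrow> (('m, 'e) chart \<Rightarrow> 'm \<Rightarrow> 'e set) \<Rightarrow> ('e set \<times> ('e \<Rightarrow> 'e)) set"
  for c D where
  base: "horizontal_field_on c D W X \<Longrightarrow> (W, X) \<in> bracket_fields c D"
| brk: "(W, X) \<in> bracket_fields c D \<Longrightarrow> (W', Y) \<in> bracket_fields c D \<Longrightarrow>
        (W \<inter> W', \<lambda>x. frechet_derivative Y (at x) (X x) - frechet_derivative X (at x) (Y x))
          \<in> bracket_fields c D"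

definition bracket_generating ::
  "('m, 'e::euclidean_space) chart set \<Rightarrow> (('m, 'e) chart \<Rightarrow> 'm \<Rightarrow> 'e set) \<Rightarrow> bool" where
  "bracket_generating A D \<longleftrightarrow>
     (\<forall>c\<in>A. \<forall>p\<in>fst c.
        span {X (snd c p) | W X. (W, X) \<in> bracket_fields c D \<and> snd c p \<in> W} = UNIV)"

definition smooth_distribution ::
  "('m, 'e::euclidean_space) chart set \<Rightarrow> (('m, 'e) chart \<Rightarrow> 'm \<Rightarrow> 'e set) \<Rightarrow> nat \<Rightarrow> bool" where
  "smooth_distribution A D k \<longleftrightarrow>
     (\<forall>c\<in>A. \<forall>p\<in>fst c. subspace (D c p) \<and> dim (D c p) = k) \<and>
     (\<forall>c\<in>A. \<forall>c'\<in>A. \<forall>p\<in>fst c \<inter> fst c'. D c' p = chart_change c c' p ` D c p) \<and>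
     (\<forall>c\<in>A. \<forall>p\<in>fst c. \<exists>W X. open W \<and> snd c p \<in> W \<and> W \<subseteq> snd c ` fst c \<and>
          (\<forall>i<k. smooth_on W (X i)) \<and>
          (\<forall>x\<in>W. D c (chart_inv c x) = span {X i x | i. i < k}))"

definition index_one_form :: "'e::euclidean_space set \<Rightarrow> ('e \<Rightarrow> 'e \<Rightarrow> real) \<Rightarrow> bool" where
  "index_one_form V b \<longleftrightarrow>
     (\<forall>u\<in>V. \<forall>v\<in>V. b u v = b v u) \<and>
     (\<forall>u\<in>V. \<forall>v\<in>V. \<forall>w\<in>V. \<forall>r s. b (r *\<^sub>R u + s *\<^sub>R v) w = r * b u w + s * b v w) \<and>
     (\<forall>u\<in>V. (\<forall>v\<in>V. b u v = 0) \<longrightarrow> u = 0) \<and>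
     (\<exists>W. subspace W \<and> W \<subseteq> V \<and> dim W = 1 \<and> (\<forall>w\<in>W. w \<noteq> 0 \<longrightarrow> b w w < 0)) \<and>
     (\<nexists>W. subspace W \<and> W \<subseteq> V \<and> dim W = 2 \<and> (\<forall>w\<in>W. w \<noteq> 0 \<longrightarrow> b w w < 0))"

definition smooth_metric ::
  "('m, 'e::euclidean_space) chart set \<Rightarrow> (('m, 'e) chart \<Rightarrow> 'm \<Rightarrow> 'e set) \<Rightarrow>
   (('m, 'e) chart \<Rightarrow> 'm \<Rightarrow> 'e \<Rightarrow> 'e \<Rightarrow> real) \<Rightarrow> bool" where
  "smooth_metric A D g \<longleftrightarrow>
     (\<forall>c\<in>A. \<forall>p\<in>fst c. index_one_form (D c p) (g c p)) \<and>
     (\<forall>c\<in>A. \<forall>c'\<in>A. \<forall>p\<in>fst c \<inter> fst c'. \<forall>u\<in>D c p. \<forall>v\<in>D c p.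
          g c' p (chart_change c c' p u) (chart_change c c' p v) = g c p u v) \<and>
     (\<forall>c\<in>A. \<forall>W X Y. horizontal_field_on c D W X \<longrightarrow> horizontal_field_on c D W Y \<longrightarrow>
          smooth_on W (\<lambda>x. g c (chart_inv c x) (X x) (Y x)))"

definition time_orientation ::
  "('m, 'e::euclidean_space) chart set \<Rightarrow> (('m, 'e) chart \<Rightarrow> 'm \<Rightarrow> 'e set) \<Rightarrow>
   (('m, 'e) chart \<Rightarrow> 'm \<Rightarrow> 'e \<Rightarrow> 'e \<Rightarrow> real) \<Rightarrow> (('m, 'e) chart \<Rightarrow> 'm \<Rightarrow> 'e) \<Rightarrow> bool" where
  "time_orientation A D g T \<longleftrightarrow>
     (\<forall>c\<in>A. \<forall>p\<in>fst c. T c p \<in> D c p \<and> g c p (T c p) (T c p) < 0) \<and>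
     (\<forall>c\<in>A. \<forall>c'\<in>A. \<forall>p\<in>fst c \<inter> fst c'. T c' p = chart_change c c' p (T c p)) \<and>
     (\<forall>c\<in>A. smooth_on (snd c ` fst c) (\<lambda>x. T c (chart_inv c x)))"

text \<open>A sub-space-time (M,D,g,T): M = UNIV of a connected Hausdorff second countable
  space 'm with a smooth atlas A modelled on 'e (so dim M = DIM('e)); D of rank k.\<close>

definition sub_space_time ::
  "('m::{t2_space, second_countable_topology}, 'e::euclidean_space) chart set \<Rightarrow>
   (('m, 'e) chart \<Rightarrow> 'm \<Rightarrow> 'e set) \<Rightarrow> nat \<Rightarrow>
   (('m, 'e) chart \<Rightarrow> 'm \<Rightarrow> 'e \<Rightarrow> 'e \<Rightarrow> real) \<Rightarrow> (('m, 'e) chart \<Rightarrow> 'm \<Rightarrow> 'e) \<Rightarrow> bool" where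
  "sub_space_time A D k g T \<longleftrightarrow>
     connected (UNIV :: 'm set) \<and> smooth_atlas A \<and>
     2 \<le> k \<and> k < DIM('e) \<and>
     smooth_distribution A D k \<and> bracket_generating A D \<and>
     smooth_metric A D g \<and> time_orientation A D g T"

definition abs_continuous_on :: "real set \<Rightarrow> (real \<Rightarrow> 'e::real_normed_vector) \<Rightarrow> bool" where
  "abs_continuous_on J f \<longleftrightarrow>
     (\<forall>\<epsilon>>0. \<exists>\<delta>>0. \<forall>(n::nat) (a::nat \<Rightarrow> real) b.
        (\<forall>i<n. a i \<le> b i \<and> {a i..b i} \<subseteq> J) \<and>
        (\<forall>i<n. \<forall>j<n. i \<noteq> j \<longrightarrow> b i \<le> a j \<or> b j \<le> a i) \<and>
        (\<Sum>i<n. b i - a i) < \<delta> \<longrightarrow>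
        (\<Sum>i<n. norm (f (b i) - f (a i))) < \<epsilon>)"

definition tfd_curve ::
  "('m::topological_space, 'e::euclidean_space) chart set \<Rightarrow> (('m, 'e) chart \<Rightarrow> 'm \<Rightarrow> 'e set) \<Rightarrow>
   (('m, 'e) chart \<Rightarrow> 'm \<Rightarrow> 'e \<Rightarrow> 'e \<Rightarrow> real) \<Rightarrow> (('m, 'e) chart \<Rightarrow> 'm \<Rightarrow> 'e) \<Rightarrow>
   real set \<Rightarrow> (real \<Rightarrow> 'm) \<Rightarrow> bool" where
  "tfd_curve A D g T I \<gamma> \<longleftrightarrow>
     is_interval I \<and>
     (\<forall>t\<in>I. \<exists>c\<in>A. \<exists>\<epsilon>>0.
        let J = I \<inter> cball t \<epsilon>; f = snd c \<circ> \<gamma> in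
        \<gamma> ` J \<subseteq> fst c \<and>
        abs_continuous_on J f \<and>
        (\<lambda>s. (norm (vector_derivative f (at s within J)))\<^sup>2) integrable_on J \<and>
        (AE s in lebesgue_on J.
           \<exists>v. (f has_vector_derivative v) (at s within J) \<and>
               v \<in> D c (\<gamma> s) \<and> g c (\<gamma> s) v v < 0 \<and> g c (\<gamma> s) (T c (\<gamma> s)) v < 0))"

definition chron_rel ::
  "('m::topological_space, 'e::euclidean_space) chart set \<Rightarrow> (('m, 'e) chart \<Rightarrow> 'm \<Rightarrow> 'e set) \<Rightarrow>
   (('m, 'e) chart \<Rightarrow> 'm \<Rightarrow> 'e \<Rightarrow> 'e \<Rightarrow> real) \<Rightarrow> (('m, 'e) chart \<Rightarrow> 'm \<Rightarrow> 'e) \<Rightarrow> 'm \<Rightarrow> 'm \<Rightarrow> bool" where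
  "chron_rel A D g T p q \<longleftrightarrow>
     (\<exists>a b \<gamma>. a < b \<and> tfd_curve A D g T {a..b} \<gamma> \<and> \<gamma> a = p \<and> \<gamma> b = q)"

definition I_plus where "I_plus A D g T p = {q. chron_rel A D g T p q}"
definition I_minus where "I_minus A D g T p = {q. chron_rel A D g T q p}"

text \<open>Alexandrov topology on M = UNIV, generated by the subbasis of all I^+(p), I^-(p)
  (with the usual convention that M itself is open).\<close>
definition alexandrov_topology where
  "alexandrov_topology A D g T =
     topology_generated_by
       ({UNIV} \<union> range (I_plus A D g T) \<union> range (I_minus A D g T))"

definition chronological where
  "chronological A D g T \<longleftrightarrow> \<not> (\<exists>p. chron_rel A D g T p p)"

end

theory Submission
  imports Defs
begin

text \<open>
  Along a timelike future directed curve \<open>\<gamma>\<close>, \<open>u < v\<close> implies \<open>\<gamma> u \<lless> \<gamma> v\<close>. Concatenating curves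
  shows that \<open>\<lless>\<close> is transitive; the delicate point is the junction, where the two curves may
  be controlled in different charts and one piece has to be transported through the (smooth,
  hence locally Lipschitz) transition map. In a chronological space \<open>\<lless>\<close> is in addition
  irreflexive, so \<open>\<gamma> s \<in> I\<^sup>+(\<gamma> t\<^sub>1) \<inter> I\<^sup>-(\<gamma> t\<^sub>2)\<close> forces \<open>t\<^sub>1 < s < t\<^sub>2\<close>: these Alexandrov open sets
  pull back to arbitrarily small neighbourhoods of any parameter between \<open>t\<^sub>1\<close> and \<open>t\<^sub>2\<close>.
  Conversely, a closed curve \<open>\<gamma>\<close> on \<open>{a..b}\<close> with \<open>\<gamma> a = \<gamma> b\<close> cannot separate \<open>a\<close> from \<open>b\<close> in
  any pulled-back topology, whereas \<open>[a, (a + b) / 2)\<close> does so in the standard one.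
\<close>

section \<open>Absolute continuity\<close>

definition disjoint_subintervals :: "real set \<Rightarrow> nat \<Rightarrow> (nat \<Rightarrow> real) \<Rightarrow> (nat \<Rightarrow> real) \<Rightarrow> bool" where
  "disjoint_subintervals J n a b \<longleftrightarrow>
     (\<forall>i<n. a i \<le> b i \<and> {a i..b i} \<subseteq> J) \<and>
     (\<forall>i<n. \<forall>j<n. i \<noteq> j \<longrightarrow> b i \<le> a j \<or> b j \<le> a i)"

lemma abs_continuous_onE:
  assumes "abs_continuous_on J f" "e > 0"
  obtains d where "d > 0"
    "\<And>n a b. disjoint_subintervals J n a b \<Longrightarrow> (\<Sum>i<n. b i - a i) < d \<Longrightarrow>
       (\<Sum>i<n. norm (f (b i) - f (a i))) < e"
proof -
  obtain d where "d > 0" and d: "\<forall>(n::nat) a b. (\<forall>i<n. a i \<le> b i \<and> {a i..b i} \<subseteq> J) \<and>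
        (\<forall>i<n. \<forall>j<n. i \<noteq> j \<longrightarrow> b i \<le> a j \<or> b j \<le> a i) \<and>
        (\<Sum>i<n. b i - a i) < d \<longrightarrow> (\<Sum>i<n. norm (f (b i) - f (a i))) < e"
    using assms unfolding abs_continuous_on_def by blast
  show thesis
  proof (rule that[OF \<open>d > 0\<close>])
    fix n a b assume "disjoint_subintervals J n a b" "(\<Sum>i<n. b i - a i) < d"
    then show "(\<Sum>i<n. norm (f (b i) - f (a i))) < e"
      using d unfolding disjoint_subintervals_def by simp
  qed
qed

lemma abs_continuous_onI:
  assumes "\<And>e. e > 0 \<Longrightarrow> \<exists>d>0. \<forall>n a b. disjoint_subintervals J n a b \<longrightarrow>
             (\<Sum>i<n. b i - a i) < d \<longrightarrow> (\<Sum>i<n. norm (f (b i) - f (a i))) < e"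
  shows "abs_continuous_on J f"
  unfolding abs_continuous_on_def
proof (intro allI impI)
  fix e :: real assume "e > 0"
  then obtain d where "d > 0" and d: "\<forall>n a b. disjoint_subintervals J n a b \<longrightarrow>
             (\<Sum>i<n. b i - a i) < d \<longrightarrow> (\<Sum>i<n. norm (f (b i) - f (a i))) < e"
    using assms by blast
  then show "\<exists>\<delta>>0. \<forall>(n::nat) a b. (\<forall>i<n. a i \<le> b i \<and> {a i..b i} \<subseteq> J) \<and>
        (\<forall>i<n. \<forall>j<n. i \<noteq> j \<longrightarrow> b i \<le> a j \<or> b j \<le> a i) \<and>
        (\<Sum>i<n. b i - a i) < \<delta> \<longrightarrow> (\<Sum>i<n. norm (f (b i) - f (a i))) < e"
    unfolding disjoint_subintervals_def by blast
qed

lemma disjoint_subintervals_single: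
  "a \<le> b \<Longrightarrow> {a..b} \<subseteq> J \<Longrightarrow> disjoint_subintervals J 1 (\<lambda>_. a) (\<lambda>_. b)"
  unfolding disjoint_subintervals_def by simp

lemma disjoint_subintervals_subset:
  "disjoint_subintervals J n a b \<Longrightarrow> J \<subseteq> J' \<Longrightarrow> disjoint_subintervals J' n a b"
  unfolding disjoint_subintervals_def by blast

lemma disjoint_subintervalsD:
  assumes "disjoint_subintervals J n a b" "i < n"
  shows "a i \<le> b i" "a i \<in> J" "b i \<in> J"
proof -
  have "a i \<le> b i" "{a i..b i} \<subseteq> J"
    using assms unfolding disjoint_subintervals_def by auto
  then show "a i \<le> b i" "a i \<in> J" "b i \<in> J" by auto
qed

lemma disjoint_subintervals_clip_left:
  assumes "disjoint_subintervals {u..w} n a c" "u \<le> b"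
  shows "disjoint_subintervals {u..b} n (\<lambda>i. min (a i) b) (\<lambda>i. min (c i) b)"
  using assms unfolding disjoint_subintervals_def
  by (auto simp: min_def) (meson order.trans)+

lemma disjoint_subintervals_clip_right:
  assumes "disjoint_subintervals {u..w} n a c" "b \<le> w"
  shows "disjoint_subintervals {b..w} n (\<lambda>i. max (a i) b) (\<lambda>i. max (c i) b)"
  using assms unfolding disjoint_subintervals_def
  by (auto simp: max_def) (meson order.trans)+

lemma abs_continuous_on_small_increment:
  assumes "abs_continuous_on J f" "e > 0"
  obtains d where "d > 0" "\<And>x y. x \<le> y \<Longrightarrow> {x..y} \<subseteq> J \<Longrightarrow> y - x < d \<Longrightarrow> norm (f y - f x) < e"
proof -
  obtain d where "d > 0" and d: "\<And>n a b. disjoint_subintervals J n a b \<Longrightarrow> (\<Sum>i<n. b i - a i) < d \<Longrightarrow>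
       (\<Sum>i<n. norm (f (b i) - f (a i))) < e"
    using abs_continuous_onE[OF assms] by blast
  show thesis
  proof (rule that[OF \<open>d > 0\<close>])
    fix x y assume "x \<le> y" "{x..y} \<subseteq> J" "y - x < d"
    then show "norm (f y - f x) < e"
      using d[OF disjoint_subintervals_single, of x y] by simp
  qed
qed

lemma abs_continuous_on_imp_continuous_on:
  fixes f :: "real \<Rightarrow> 'a::real_normed_vector"
  assumes "abs_continuous_on J f" "is_interval J"
  shows "continuous_on J f"
  unfolding continuous_on_iff
proof (intro ballI allI impI)
  fix x e :: real assume x: "x \<in> J" and "e > 0"
  then obtain d where "d > 0" and d: "\<And>x y. x \<le> y \<Longrightarrow> {x..y} \<subseteq> J \<Longrightarrow> y - x < d \<Longrightarrow> norm (f y - f x) < e"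
    using abs_continuous_on_small_increment[OF assms(1)] by blast
  have "dist (f y) (f x) < e" if y: "y \<in> J" "dist y x < d" for y
  proof -
    have "min x y \<in> J" "max x y \<in> J"
      using x y(1) by (auto simp: min_def max_def)
    then have "{min x y..max x y} \<subseteq> J"
      using assms(2) unfolding is_interval_1 by (meson atLeastAtMost_iff subsetI)
    then have "norm (f (max x y) - f (min x y)) < e"
      using d[of "min x y" "max x y"] y(2) by (simp add: dist_real_def)
    moreover have "dist (f y) (f x) = norm (f (max x y) - f (min x y))"
      by (cases "x \<le> y") (simp_all add: dist_norm norm_minus_commute max_def min_def)
    ultimately show ?thesis by simp
  qed
  then show "\<exists>d>0. \<forall>y\<in>J. dist y x < d \<longrightarrow> dist (f y) (f x) < e"
    using \<open>d > 0\<close> by blast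
qed

lemma abs_continuous_on_cong:
  assumes "abs_continuous_on J f" "\<And>s. s \<in> J \<Longrightarrow> f' s = f s"
  shows "abs_continuous_on J f'"
proof (rule abs_continuous_onI)
  fix e :: real assume "e > 0"
  then obtain d where "d > 0" and d: "\<And>n a b. disjoint_subintervals J n a b \<Longrightarrow>
      (\<Sum>i<n. b i - a i) < d \<Longrightarrow> (\<Sum>i<n. norm (f (b i) - f (a i))) < e"
    using abs_continuous_onE[OF assms(1)] by blast
  have "(\<Sum>i<n. norm (f' (b i) - f' (a i))) = (\<Sum>i<n. norm (f (b i) - f (a i)))"
    if "disjoint_subintervals J n a b" for n a b
  proof (rule sum.cong[OF refl])
    fix i assume "i \<in> {..<n}"
    then have "a i \<le> b i" "{a i..b i} \<subseteq> J"
      using that unfolding disjoint_subintervals_def by auto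
    then have "a i \<in> J" "b i \<in> J" by auto
    then show "norm (f' (b i) - f' (a i)) = norm (f (b i) - f (a i))"
      using assms(2) by simp
  qed
  then show "\<exists>d>0. \<forall>n a b. disjoint_subintervals J n a b \<longrightarrow>
      (\<Sum>i<n. b i - a i) < d \<longrightarrow> (\<Sum>i<n. norm (f' (b i) - f' (a i))) < e"
    using \<open>d > 0\<close> d by auto
qed

lemma abs_continuous_on_subset:
  assumes "abs_continuous_on J f" "J' \<subseteq> J"
  shows "abs_continuous_on J' f"
proof (rule abs_continuous_onI)
  fix e :: real assume "e > 0"
  then obtain d where "d > 0" and d: "\<And>n a b. disjoint_subintervals J n a b \<Longrightarrow>
      (\<Sum>i<n. b i - a i) < d \<Longrightarrow> (\<Sum>i<n. norm (f (b i) - f (a i))) < e"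
    using abs_continuous_onE[OF assms(1)] by blast
  then show "\<exists>d>0. \<forall>n a b. disjoint_subintervals J' n a b \<longrightarrow>
      (\<Sum>i<n. b i - a i) < d \<longrightarrow> (\<Sum>i<n. norm (f (b i) - f (a i))) < e"
    using disjoint_subintervals_subset[OF _ assms(2)] by blast
qed

lemma abs_continuous_on_translate:
  assumes "abs_continuous_on J f"
  shows "abs_continuous_on ((\<lambda>s. s + h) ` J) (\<lambda>s. f (s - h))"
proof (rule abs_continuous_onI)
  fix e :: real assume "e > 0"
  then obtain d where "d > 0" and d: "\<And>n a b. disjoint_subintervals J n a b \<Longrightarrow>
      (\<Sum>i<n. b i - a i) < d \<Longrightarrow> (\<Sum>i<n. norm (f (b i) - f (a i))) < e"
    using abs_continuous_onE[OF assms(1)] by blast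
  have shifted: "disjoint_subintervals J n (\<lambda>i. a i - h) (\<lambda>i. b i - h)"
    if "disjoint_subintervals ((\<lambda>s. s + h) ` J) n a b" for n a b
  proof -
    have "{a i - h..b i - h} \<subseteq> J" if "{a i..b i} \<subseteq> (\<lambda>s. s + h) ` J" for i
    proof
      fix x assume "x \<in> {a i - h..b i - h}"
      then have "x + h \<in> (\<lambda>s. s + h) ` J" using that by auto
      then show "x \<in> J" by auto
    qed
    then show ?thesis
      using that unfolding disjoint_subintervals_def by auto
  qed
  show "\<exists>d>0. \<forall>n a b. disjoint_subintervals ((\<lambda>s. s + h) ` J) n a b \<longrightarrow>
      (\<Sum>i<n. b i - a i) < d \<longrightarrow> (\<Sum>i<n. norm (f (b i - h) - f (a i - h))) < e"
  proof (intro exI[of _ d] conjI allI impI)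
    fix n a b assume H: "disjoint_subintervals ((\<lambda>s. s + h) ` J) n a b" "(\<Sum>i<n. b i - a i) < d"
    have "(\<Sum>i<n. (b i - h) - (a i - h)) < d" using H(2) by simp
    then show "(\<Sum>i<n. norm (f (b i - h) - f (a i - h))) < e"
      using d[OF shifted[OF H(1)]] by simp
  qed (rule \<open>d > 0\<close>)
qed

lemma abs_continuous_on_join:
  fixes f :: "real \<Rightarrow> 'a::real_normed_vector"
  assumes "abs_continuous_on {u..b} f" "abs_continuous_on {b..w} f" "u \<le> b" "b \<le> w"
  shows "abs_continuous_on {u..w} f"
proof (rule abs_continuous_onI)
  fix e :: real assume "e > 0"
  obtain d1 where "d1 > 0" and d1: "\<And>n a c. disjoint_subintervals {u..b} n a c \<Longrightarrow>
      (\<Sum>i<n. c i - a i) < d1 \<Longrightarrow> (\<Sum>i<n. norm (f (c i) - f (a i))) < e / 2"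
    using abs_continuous_onE[OF assms(1)] \<open>e > 0\<close> by (metis half_gt_zero)
  obtain d2 where "d2 > 0" and d2: "\<And>n a c. disjoint_subintervals {b..w} n a c \<Longrightarrow>
      (\<Sum>i<n. c i - a i) < d2 \<Longrightarrow> (\<Sum>i<n. norm (f (c i) - f (a i))) < e / 2"
    using abs_continuous_onE[OF assms(2)] \<open>e > 0\<close> by (metis half_gt_zero)
  have "(\<Sum>i<n. norm (f (c i) - f (a i))) < e"
    if H: "disjoint_subintervals {u..w} n a c" "(\<Sum>i<n. c i - a i) < min d1 d2" for n a c
  proof -
    define a1 c1 a2 c2 where "a1 i = min (a i) b" "c1 i = min (c i) b"
      "a2 i = max (a i) b" "c2 i = max (c i) b" for i
    note ac = disjoint_subintervalsD(1)[OF H(1)]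
    have "c1 i - a1 i \<le> c i - a i" "c2 i - a2 i \<le> c i - a i" if "i < n" for i
      using ac[OF that] by (auto simp: a1_c1_a2_c2_def min_def max_def)
    then have "(\<Sum>i<n. c1 i - a1 i) \<le> (\<Sum>i<n. c i - a i)" "(\<Sum>i<n. c2 i - a2 i) \<le> (\<Sum>i<n. c i - a i)"
      by (auto intro!: sum_mono)
    then have left: "(\<Sum>i<n. norm (f (c1 i) - f (a1 i))) < e / 2"
      and right: "(\<Sum>i<n. norm (f (c2 i) - f (a2 i))) < e / 2"
      using d1[OF disjoint_subintervals_clip_left[OF H(1) assms(3)]]
        d2[OF disjoint_subintervals_clip_right[OF H(1) assms(4)]] H(2)
      unfolding a1_c1_a2_c2_def by auto
    have split: "norm (f (c i) - f (a i)) \<le> norm (f (c1 i) - f (a1 i)) + norm (f (c2 i) - f (a2 i))"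
      if "i < n" for i
    proof (cases "a i < b \<and> b < c i")
      case True
      then show ?thesis
        using norm_triangle_ineq[of "f (c i) - f b" "f b - f (a i)"]
        by (simp add: a1_c1_a2_c2_def min_def max_def add.commute)
    next
      case False
      then consider "c i \<le> b" | "b \<le> a i" by linarith
      then show ?thesis
        using ac[OF that] by cases (simp_all add: a1_c1_a2_c2_def)
    qed
    have "(\<Sum>i<n. norm (f (c i) - f (a i))) \<le>
          (\<Sum>i<n. norm (f (c1 i) - f (a1 i))) + (\<Sum>i<n. norm (f (c2 i) - f (a2 i)))"
      unfolding sum.distrib[symmetric] by (rule sum_mono) (use split in auto)
    then show ?thesis
      using left right by simp
  qed
  moreover have "min d1 d2 > 0"
    using \<open>d1 > 0\<close> \<open>d2 > 0\<close> by simp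
  ultimately show "\<exists>d>0. \<forall>n a c. disjoint_subintervals {u..w} n a c \<longrightarrow>
      (\<Sum>i<n. c i - a i) < d \<longrightarrow> (\<Sum>i<n. norm (f (c i) - f (a i))) < e"
    by blast
qed

lemma abs_continuous_on_compose_Lipschitz:
  fixes f :: "real \<Rightarrow> 'a::real_normed_vector" and h :: "'a \<Rightarrow> 'b::real_normed_vector"
  assumes f: "abs_continuous_on J f" and "r > 0" "M \<ge> 0"
    and h: "\<And>x y. x \<in> f ` J \<Longrightarrow> norm (y - x) \<le> r \<Longrightarrow> norm (h y - h x) \<le> M * norm (y - x)"
  shows "abs_continuous_on J (h \<circ> f)"
proof (rule abs_continuous_onI)
  fix e :: real assume "e > 0"
  then have "e / (M + 1) > 0" using \<open>M \<ge> 0\<close> by simp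
  obtain d1 where "d1 > 0" and d1: "\<And>n a b. disjoint_subintervals J n a b \<Longrightarrow>
      (\<Sum>i<n. b i - a i) < d1 \<Longrightarrow> (\<Sum>i<n. norm (f (b i) - f (a i))) < r"
    using abs_continuous_onE[OF f \<open>r > 0\<close>] by blast
  obtain d2 where "d2 > 0" and d2: "\<And>n a b. disjoint_subintervals J n a b \<Longrightarrow>
      (\<Sum>i<n. b i - a i) < d2 \<Longrightarrow> (\<Sum>i<n. norm (f (b i) - f (a i))) < e / (M + 1)"
    using abs_continuous_onE[OF f \<open>e / (M + 1) > 0\<close>] by blast
  have "(\<Sum>i<n. norm (h (f (b i)) - h (f (a i)))) < e"
    if H: "disjoint_subintervals J n a b" "(\<Sum>i<n. b i - a i) < min d1 d2" for n a b
  proof -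
    have small: "(\<Sum>i<n. norm (f (b i) - f (a i))) < r"
      using d1[OF H(1)] H(2) by simp
    have "norm (h (f (b i)) - h (f (a i))) \<le> M * norm (f (b i) - f (a i))" if "i < n" for i
    proof (rule h)
      show "f (a i) \<in> f ` J"
        using disjoint_subintervalsD(2)[OF H(1) that] by simp
      have "norm (f (b i) - f (a i)) \<le> (\<Sum>i<n. norm (f (b i) - f (a i)))"
        by (rule member_le_sum) (use that in auto)
      then show "norm (f (b i) - f (a i)) \<le> r"
        using small by simp
    qed
    then have "(\<Sum>i<n. norm (h (f (b i)) - h (f (a i)))) \<le> M * (\<Sum>i<n. norm (f (b i) - f (a i)))"
      unfolding sum_distrib_left by (intro sum_mono) simp
    also have "\<dots> \<le> M * (e / (M + 1))"
      using d2[OF H(1)] H(2) \<open>M \<ge> 0\<close> by (intro mult_left_mono) simp_all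
    also have "\<dots> < e"
      using \<open>e > 0\<close> \<open>M \<ge> 0\<close> by (simp add: field_simps)
    finally show ?thesis .
  qed
  moreover have "min d1 d2 > 0"
    using \<open>d1 > 0\<close> \<open>d2 > 0\<close> by simp
  ultimately show "\<exists>d>0. \<forall>n a b. disjoint_subintervals J n a b \<longrightarrow>
      (\<Sum>i<n. b i - a i) < d \<longrightarrow> (\<Sum>i<n. norm ((h \<circ> f) (b i) - (h \<circ> f) (a i))) < e"
    unfolding comp_apply by blast
qed

lemma AE_lebesgue_on_iff_negligible:
  assumes "S \<in> sets lebesgue"
  shows "(AE x in lebesgue_on S. P x) \<longleftrightarrow> (\<exists>N. negligible N \<and> (\<forall>x\<in>S - N. P x))"
proof -
  have "(AE x in lebesgue_on S. P x) \<longleftrightarrow> (AE x in lebesgue. x \<in> S \<longrightarrow> P x)"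
    using assms by (simp add: AE_restrict_space_iff)
  also have "\<dots> \<longleftrightarrow> (\<exists>N. negligible N \<and> (\<forall>x\<in>S - N. P x))"
    unfolding eventually_ae_filter_negligible by blast
  finally show ?thesis .
qed

lemma sets_lebesgue_Icc: "{p..q::real} \<in> sets lebesgue"
  by simp

lemma is_interval_Int_cball_in_sets_lebesgue:
  fixes I :: "real set"
  assumes "is_interval I"
  shows "I \<inter> cball t e \<in> sets lebesgue"
proof -
  have "convex (I \<inter> cball t e)"
    using assms by (simp add: convex_Int is_interval_convex_1)
  then show ?thesis
    using measurable_convex fmeasurableD bounded_Int bounded_cball by blast
qed

lemma Icc_Int_cball: "{u..v} \<inter> cball t e = {max u (t - e)..min v (t + e::real)}"
  by (auto simp: dist_real_def abs_le_iff)

lemma trivial_limit_within_Icc_subset: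
  fixes s :: real
  assumes "p < q" "s \<in> {p..q}" "{p..q} \<subseteq> S"
  shows "at s within S \<noteq> bot"
proof -
  have "s islimpt {p..q}" using assms by simp
  then show ?thesis
    using assms(3) islimpt_subset trivial_limit_within by blast
qed

lemma at_within_Icc_left:
  fixes s :: real
  assumes "s < b" "b \<le> w"
  shows "at s within {u..w} = at s within {u..b}"
  by (rule at_within_nhd[where S="{..<b}"]) (use assms in auto)

lemma at_within_Icc_right:
  fixes s :: real
  assumes "b < s" "u \<le> b"
  shows "at s within {u..w} = at s within {b..w}"
  by (rule at_within_nhd[where S="{b<..}"]) (use assms in auto)

lemma has_vector_derivative_translate_iff:
  fixes f :: "real \<Rightarrow> 'a::real_normed_vector"
  shows "((\<lambda>s. f (s - h)) has_vector_derivative v) (at s within (\<lambda>s. s + h) ` J) \<longleftrightarrow>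
         (f has_vector_derivative v) (at (s - h) within J)"
proof
  assume "((\<lambda>s. f (s - h)) has_vector_derivative v) (at s within (\<lambda>s. s + h) ` J)"
  then have "((\<lambda>s. f (s - h)) has_vector_derivative v) (at ((\<lambda>s. s + h) (s - h)) within (\<lambda>s. s + h) ` J)"
    by simp
  moreover have "((\<lambda>s. s + h) has_vector_derivative 1) (at (s - h) within J)"
    by (auto intro!: derivative_eq_intros)
  ultimately have "(((\<lambda>s. f (s - h)) \<circ> (\<lambda>s. s + h)) has_vector_derivative (1 *\<^sub>R v)) (at (s - h) within J)"
    using vector_diff_chain_within by blast
  then show "(f has_vector_derivative v) (at (s - h) within J)"
    by (simp add: o_def)
next
  assume "(f has_vector_derivative v) (at (s - h) within J)"
  moreover have "(\<lambda>s. s - h) ` (\<lambda>s. s + h) ` J = J"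
    by (auto simp: image_iff)
  ultimately have "(f has_vector_derivative v) (at ((\<lambda>s. s - h) s) within (\<lambda>s. s - h) ` (\<lambda>s. s + h) ` J)"
    by simp
  moreover have "((\<lambda>s. s - h) has_vector_derivative 1) (at s within (\<lambda>s. s + h) ` J)"
    by (auto intro!: derivative_eq_intros)
  ultimately have "((f \<circ> (\<lambda>s. s - h)) has_vector_derivative (1 *\<^sub>R v)) (at s within (\<lambda>s. s + h) ` J)"
    using vector_diff_chain_within by blast
  then show "((\<lambda>s. f (s - h)) has_vector_derivative v) (at s within (\<lambda>s. s + h) ` J)"
    by (simp add: o_def)
qed

lemma has_vector_derivative_imp_tendsto_difference_quotient:
  fixes f :: "real \<Rightarrow> 'a::real_normed_vector"
  assumes "(f has_vector_derivative D) (at x within S)"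
  shows "((\<lambda>y. (1 / (y - x)) *\<^sub>R (f y - f x)) \<longlongrightarrow> D) (at x within S)"
proof -
  have "((\<lambda>y. norm ((f y - f x) - (y - x) *\<^sub>R D) / norm (y - x)) \<longlongrightarrow> 0) (at x within S)"
    using assms unfolding has_vector_derivative_def has_derivative_iff_norm by simp
  moreover have "eventually (\<lambda>y. norm ((f y - f x) - (y - x) *\<^sub>R D) / norm (y - x) =
      norm ((1 / (y - x)) *\<^sub>R (f y - f x) - D)) (at x within S)"
    unfolding eventually_at_filter
  proof (rule always_eventually, intro allI impI)
    fix y assume "y \<noteq> x"
    then have ne: "y - x \<noteq> 0" by simp
    have "(1 / (y - x)) *\<^sub>R (f y - f x) - D = (1 / (y - x)) *\<^sub>R ((f y - f x) - (y - x) *\<^sub>R D)"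
      using ne by (simp add: scaleR_diff_right)
    then show "norm ((f y - f x) - (y - x) *\<^sub>R D) / norm (y - x) = norm ((1 / (y - x)) *\<^sub>R (f y - f x) - D)"
      by (simp add: divide_inverse mult.commute)
  qed
  ultimately have "((\<lambda>y. norm ((1 / (y - x)) *\<^sub>R (f y - f x) - D)) \<longlongrightarrow> 0) (at x within S)"
    by (rule Lim_transform_eventually)
  then show ?thesis unfolding tendsto_norm_zero_iff LIM_zero_iff .
qed

lemma eventually_one_over_Suc_less:
  "(0::real) < d \<Longrightarrow> eventually (\<lambda>n. 1 / real (Suc n) < d) sequentially"
  by (rule order_tendstoD(2)[OF LIMSEQ_Suc[OF lim_const_over_n]])

lemma measurable_on_vector_derivative_within_Icc:
  fixes F :: "real \<Rightarrow> 'e::euclidean_space"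
  assumes pq: "p < q" and cont: "continuous_on {p..q} F" and N: "negligible N"
    and der: "\<And>s. s \<in> {p..q} - N \<Longrightarrow> \<exists>v. (F has_vector_derivative v) (at s within {p..q})"
  shows "(\<lambda>s. vector_derivative F (at s within {p..q})) measurable_on {p..q}"
proof -
  \<comment> \<open>Forward difference quotients, truncated at \<open>q\<close> so that they stay continuous on \<open>{p..q}\<close>;
    they converge to the derivative at every \<open>s < q\<close> off \<open>N\<close>.\<close>
  define Q where "Q n s = real (Suc n) *\<^sub>R (F (min (s + 1 / real (Suc n)) q) - F s)" for n s
  have Qm: "Q n measurable_on {p..q}" for n
  proof -
    have "continuous_on {p..q} (\<lambda>s. min (s + 1 / real (Suc n)) q)"
      by (intro continuous_intros)
    moreover have "(\<lambda>s. min (s + 1 / real (Suc n)) q) ` {p..q} \<subseteq> {p..q}"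
    proof -
      have pos: "0 \<le> 1 / real (Suc n)" by simp
      show ?thesis using pos by (auto simp: min_def intro!: add_increasing2)
    qed
    ultimately have "continuous_on {p..q} (\<lambda>s. F (min (s + 1 / real (Suc n)) q))"
      using continuous_on_compose2[OF cont] by blast
    then have "continuous_on {p..q} (Q n)" unfolding Q_def
      by (intro continuous_intros cont)
    then have "Q n \<in> borel_measurable (lebesgue_on {p..q})"
      by (rule continuous_imp_measurable_on_sets_lebesgue) simp
    then show ?thesis by (simp add: measurable_on_iff_borel_measurable)
  qed
  show ?thesis
  proof (rule measurable_on_limit[OF Qm, of "N \<union> {q}"])
    show "negligible (N \<union> {q})" using N by simp
    fix s assume s: "s \<in> {p..q} - (N \<union> {q})"
    then have sq: "s < q" and sp: "p \<le> s" by auto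
    obtain v where v: "(F has_vector_derivative v) (at s within {p..q})" using der s by blast
    have vd: "vector_derivative F (at s within {p..q}) = v"
      by (rule vector_derivative_within[OF trivial_limit_within_Icc_subset[OF pq _ order_refl] v]) (use s in auto)
    have lim1: "((\<lambda>y. (1 / (y - s)) *\<^sub>R (F y - F s)) \<longlongrightarrow> v) (at s within {p..q})"
      by (rule has_vector_derivative_imp_tendsto_difference_quotient[OF v])
    have ev: "eventually (\<lambda>n. 1 / real (Suc n) < q - s) sequentially"
      using sq by (intro eventually_one_over_Suc_less) simp
    have seq: "filterlim (\<lambda>n. s + 1 / real (Suc n)) (at s within {p..q}) sequentially"
      unfolding filterlim_at
    proof
      show "eventually (\<lambda>n. s + 1 / real (Suc n) \<in> {p..q} \<and> s + 1 / real (Suc n) \<noteq> s) sequentially"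
        using ev by eventually_elim (use sp in \<open>auto intro!: add_increasing2\<close>)
      have "((\<lambda>n. 1 / real (Suc n)) \<longlongrightarrow> 0) sequentially"
        by (rule LIMSEQ_Suc[OF lim_const_over_n])
      then show "((\<lambda>n. s + 1 / real (Suc n)) \<longlongrightarrow> s) sequentially"
        using tendsto_add[OF tendsto_const[of s]] by fastforce
    qed
    have lim2: "((\<lambda>n. (1 / ((s + 1 / real (Suc n)) - s)) *\<^sub>R (F (s + 1 / real (Suc n)) - F s)) \<longlongrightarrow> v) sequentially"
      using filterlim_compose[OF lim1 seq] by (simp add: o_def)
    have ev2: "eventually (\<lambda>n. (1 / ((s + 1 / real (Suc n)) - s)) *\<^sub>R (F (s + 1 / real (Suc n)) - F s) = Q n s) sequentially"
      using ev by eventually_elim (auto simp: Q_def min_def)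
    show "(\<lambda>n. Q n s) \<longlonglongrightarrow> vector_derivative F (at s within {p..q})"
      unfolding vd using Lim_transform_eventually[OF lim2 ev2] .
  qed
qed

lemma square_integrable_vector_derivative_dominated:
  fixes F G :: "real \<Rightarrow> 'e::euclidean_space"
  assumes "p < q" "continuous_on {p..q} G" "negligible N"
    and G: "\<And>s. s \<in> {p..q} - N \<Longrightarrow> \<exists>w. (G has_vector_derivative w) (at s within {p..q})"
    and bound: "\<And>s. s \<in> {p..q} - N \<Longrightarrow>
      norm (vector_derivative G (at s within {p..q})) \<le> M * norm (vector_derivative F (at s within {p..q}))"
    and F: "(\<lambda>s. (norm (vector_derivative F (at s within {p..q})))\<^sup>2) integrable_on {p..q}"
  shows "(\<lambda>s. (norm (vector_derivative G (at s within {p..q})))\<^sup>2) integrable_on {p..q}"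
proof -
  let ?G = "\<lambda>s. (norm (vector_derivative G (at s within {p..q})))\<^sup>2"
  let ?F = "\<lambda>s. (norm (vector_derivative F (at s within {p..q})))\<^sup>2"
  have "(\<lambda>s. vector_derivative G (at s within {p..q})) \<in> borel_measurable (lebesgue_on {p..q})"
    using measurable_on_vector_derivative_within_Icc[OF assms(1-3) G]
    by (simp add: measurable_on_iff_borel_measurable)
  then have "?G \<in> borel_measurable (lebesgue_on {p..q})"
    by measurable
  then have "?G measurable_on {p..q}"
    by (simp add: measurable_on_iff_borel_measurable)
  define G0 where "G0 s = (if s \<in> N then 0 else ?G s)" for s
  have "G0 measurable_on {p..q}"
    by (rule measurable_on_spike[OF \<open>?G measurable_on {p..q}\<close> assms(3)]) (simp add: G0_def)
  then have G0: "G0 \<in> borel_measurable (lebesgue_on {p..q})"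
    by (simp add: measurable_on_iff_borel_measurable)
  have MF: "(\<lambda>s. M\<^sup>2 * ?F s) integrable_on {p..q}"
    using integrable_on_cmult_left[OF F] by simp
  have G0_le: "norm (G0 s) \<le> M\<^sup>2 * ?F s" if "s \<in> {p..q}" for s
  proof (cases "s \<in> N")
    case False
    then have "norm (vector_derivative G (at s within {p..q})) \<le> M * norm (vector_derivative F (at s within {p..q}))"
      using bound that by blast
    then have "?G s \<le> (M * norm (vector_derivative F (at s within {p..q})))\<^sup>2"
      by (rule power_mono) simp
    then show ?thesis
      using False by (simp add: G0_def power_mult_distrib)
  qed (simp add: G0_def)
  have "G0 integrable_on {p..q}"
    by (rule measurable_bounded_by_integrable_imp_integrable[OF G0 MF G0_le]) auto
  then show ?thesis
    by (rule integrable_spike[OF _ assms(3)]) (simp add: G0_def)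
qed

lemma norm_linear_le_sum_Basis:
  fixes L :: "'e::euclidean_space \<Rightarrow> 'f::real_normed_vector"
  assumes "linear L" "\<And>i. i \<in> Basis \<Longrightarrow> norm (L i) \<le> B i"
  shows "norm (L w) \<le> (\<Sum>i\<in>Basis. \<bar>B i\<bar>) * norm w"
proof -
  have "L w = L (\<Sum>i\<in>Basis. (w \<bullet> i) *\<^sub>R i)" by (simp add: euclidean_representation)
  also have "\<dots> = (\<Sum>i\<in>Basis. (w \<bullet> i) *\<^sub>R L i)"
    using assms(1) by (simp add: linear_sum linear_cmul o_def)
  finally have "norm (L w) \<le> (\<Sum>i\<in>Basis. norm ((w \<bullet> i) *\<^sub>R L i))"
    using norm_sum by metis
  also have "\<dots> \<le> (\<Sum>i\<in>Basis. norm w * \<bar>B i\<bar>)"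
  proof (rule sum_mono)
    fix i :: 'e assume i: "i \<in> Basis"
    have "norm ((w \<bullet> i) *\<^sub>R L i) = \<bar>w \<bullet> i\<bar> * norm (L i)" by simp
    also have "\<dots> \<le> norm w * \<bar>B i\<bar>"
      by (rule mult_mono) (use Basis_le_norm[OF i, of w] assms(2)[OF i] in auto)
    finally show "norm ((w \<bullet> i) *\<^sub>R L i) \<le> norm w * \<bar>B i\<bar>" .
  qed
  also have "\<dots> = (\<Sum>i\<in>Basis. \<bar>B i\<bar>) * norm w" by (simp add: sum_distrib_left mult.commute)
  finally show ?thesis .
qed

lemma derivative_bounds_on_compact:
  fixes h :: "'e::euclidean_space \<Rightarrow> 'f::real_normed_vector"
  assumes W: "open W" and K: "compact K" "K \<subseteq> W"
    and diff: "\<And>x. x \<in> W \<Longrightarrow> h differentiable (at x)"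
    and cont: "\<And>w. continuous_on W (\<lambda>x. frechet_derivative h (at x) w)"
  obtains r M where "r > 0" "M \<ge> 0"
    "\<And>x w. x \<in> K \<Longrightarrow> norm (frechet_derivative h (at x) w) \<le> M * norm w"
    "\<And>x y. x \<in> K \<Longrightarrow> norm (y - x) \<le> r \<Longrightarrow> norm (h y - h x) \<le> M * norm (y - x)"
proof -
  obtain r where r: "r > 0" "(\<Union>x\<in>K. cball x r) \<subseteq> W"
    using compact_subset_open_imp_cball_epsilon_subset[OF K(1) W K(2)] by blast
  define K2 where "K2 = {x + y | x y. x \<in> K \<and> y \<in> cball 0 r}"
  have cK2: "compact K2" unfolding K2_def by (rule compact_sums[OF K(1) compact_cball])
  have cb: "cball x r \<subseteq> K2" if "x \<in> K" for x
  proof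
    fix z assume "z \<in> cball x r"
    then have "z = x + (z - x)" "z - x \<in> cball 0 r" by (auto simp: dist_norm norm_minus_commute)
    then show "z \<in> K2" unfolding K2_def using that by blast
  qed
  have K2W: "K2 \<subseteq> W"
  proof
    fix z assume "z \<in> K2"
    then obtain x y where "z = x + y" "x \<in> K" "y \<in> cball 0 r" unfolding K2_def by blast
    then have "z \<in> cball x r" by (simp add: dist_norm)
    then show "z \<in> W" using r(2) \<open>x \<in> K\<close> by blast
  qed
  have "\<exists>B. \<forall>x\<in>K2. norm (frechet_derivative h (at x) i) \<le> B" for i
  proof -
    have "continuous_on K2 (\<lambda>x. frechet_derivative h (at x) i)"
      using cont continuous_on_subset K2W by blast
    then have "compact ((\<lambda>x. frechet_derivative h (at x) i) ` K2)"
      using compact_continuous_image cK2 by blast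
    then have "bounded ((\<lambda>x. frechet_derivative h (at x) i) ` K2)" by (rule compact_imp_bounded)
    then show ?thesis unfolding bounded_iff by blast
  qed
  then obtain B where B: "\<And>i x. x \<in> K2 \<Longrightarrow> norm (frechet_derivative h (at x) i) \<le> B i" by metis
  define M where "M = (\<Sum>i\<in>Basis. \<bar>B i\<bar>)"
  have M0: "M \<ge> 0" unfolding M_def by (simp add: sum_nonneg)
  have bnd: "norm (frechet_derivative h (at x) w) \<le> M * norm w" if "x \<in> K2" for x w
  proof -
    have "linear (frechet_derivative h (at x))"
      using linear_frechet_derivative diff K2W that by blast
    then show ?thesis unfolding M_def by (rule norm_linear_le_sum_Basis) (use B that in auto)
  qed
  show ?thesis
  proof (rule that[OF r(1) M0])
    fix x w assume "x \<in> K"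
    then have "x \<in> cball x r" "cball x r \<subseteq> K2" using cb r(1) by auto
    then have "x \<in> K2" by blast
    then show "norm (frechet_derivative h (at x) w) \<le> M * norm w" by (rule bnd)
  next
    fix x y assume x: "x \<in> K" and y: "norm (y - x) \<le> r"
    have "norm (h y - h x) \<le> M * norm (y - x)"
    proof (rule differentiable_bound[of "cball x r" h "\<lambda>z. frechet_derivative h (at z)"])
      show "convex (cball x r)" by simp
      fix z assume z: "z \<in> cball x r"
      then have zK2: "z \<in> K2" using cb x by blast
      then have "h differentiable (at z)" using diff K2W by blast
      then show "(h has_derivative frechet_derivative h (at z)) (at z within cball x r)"
        using frechet_derivative_works has_derivative_at_withinI by blast
      show "onorm (frechet_derivative h (at z)) \<le> M"
        by (rule onorm_le) (use bnd zK2 in simp)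
    next
      show "y \<in> cball x r" using y by (simp add: dist_norm norm_minus_commute)
      show "x \<in> cball x r" using r(1) by simp
    qed
    then show "norm (h y - h x) \<le> M * norm (y - x)" .
  qed
qed

section \<open>Pieces of timelike curves in a single chart\<close>

definition tfd_velocity ::
  "(('m, 'e::euclidean_space) chart \<Rightarrow> 'm \<Rightarrow> 'e set) \<Rightarrow> (('m, 'e) chart \<Rightarrow> 'm \<Rightarrow> 'e \<Rightarrow> 'e \<Rightarrow> real) \<Rightarrow>
   (('m, 'e) chart \<Rightarrow> 'm \<Rightarrow> 'e) \<Rightarrow> ('m, 'e) chart \<Rightarrow> (real \<Rightarrow> 'm) \<Rightarrow> real set \<Rightarrow> real \<Rightarrow> bool" where
  "tfd_velocity D g T c \<gamma> J s \<longleftrightarrow>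
     (\<exists>v. ((snd c \<circ> \<gamma>) has_vector_derivative v) (at s within J) \<and>
          v \<in> D c (\<gamma> s) \<and> g c (\<gamma> s) v v < 0 \<and> g c (\<gamma> s) (T c (\<gamma> s)) v < 0)"

definition tfd_chart_piece ::
  "(('m, 'e::euclidean_space) chart \<Rightarrow> 'm \<Rightarrow> 'e set) \<Rightarrow> (('m, 'e) chart \<Rightarrow> 'm \<Rightarrow> 'e \<Rightarrow> 'e \<Rightarrow> real) \<Rightarrow>
   (('m, 'e) chart \<Rightarrow> 'm \<Rightarrow> 'e) \<Rightarrow> ('m, 'e) chart \<Rightarrow> (real \<Rightarrow> 'm) \<Rightarrow> real set \<Rightarrow> bool" where
  "tfd_chart_piece D g T c \<gamma> J \<longleftrightarrow>
     \<gamma> ` J \<subseteq> fst c \<and> abs_continuous_on J (snd c \<circ> \<gamma>) \<and>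
     (\<lambda>s. (norm (vector_derivative (snd c \<circ> \<gamma>) (at s within J)))\<^sup>2) integrable_on J \<and>
     (AE s in lebesgue_on J. tfd_velocity D g T c \<gamma> J s)"

lemma tfd_curve_iff_chart_pieces:
  "tfd_curve A D g T I \<gamma> \<longleftrightarrow>
     is_interval I \<and> (\<forall>t\<in>I. \<exists>c\<in>A. \<exists>\<epsilon>>0. tfd_chart_piece D g T c \<gamma> (I \<inter> cball t \<epsilon>))"
  by (simp add: tfd_curve_def tfd_chart_piece_def tfd_velocity_def Let_def)

lemma tfd_chart_pieceI:
  "\<gamma> ` J \<subseteq> fst c \<Longrightarrow> abs_continuous_on J (snd c \<circ> \<gamma>) \<Longrightarrow>
   (\<lambda>s. (norm (vector_derivative (snd c \<circ> \<gamma>) (at s within J)))\<^sup>2) integrable_on J \<Longrightarrow>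
   (AE s in lebesgue_on J. tfd_velocity D g T c \<gamma> J s) \<Longrightarrow> tfd_chart_piece D g T c \<gamma> J"
  by (simp add: tfd_chart_piece_def)

lemma tfd_chart_pieceD:
  assumes "tfd_chart_piece D g T c \<gamma> J"
  shows "\<gamma> ` J \<subseteq> fst c" "abs_continuous_on J (snd c \<circ> \<gamma>)"
    "(\<lambda>s. (norm (vector_derivative (snd c \<circ> \<gamma>) (at s within J)))\<^sup>2) integrable_on J"
    "AE s in lebesgue_on J. tfd_velocity D g T c \<gamma> J s"
  using assms by (simp_all add: tfd_chart_piece_def)

lemma tfd_chart_piece_subinterval:
  assumes L: "tfd_chart_piece D g T c \<gamma> J" and J: "J \<in> sets lebesgue" and sub: "{p..q} \<subseteq> J"
  shows "tfd_chart_piece D g T c \<gamma> {p..q}"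
proof (rule tfd_chart_pieceI)
  let ?f = "snd c \<circ> \<gamma>"
  show "\<gamma> ` {p..q} \<subseteq> fst c"
    using tfd_chart_pieceD(1)[OF L] sub by blast
  show "abs_continuous_on {p..q} ?f"
    using abs_continuous_on_subset[OF tfd_chart_pieceD(2)[OF L] sub] .
  obtain N where N: "negligible N" "\<And>s. s \<in> J - N \<Longrightarrow> tfd_velocity D g T c \<gamma> J s"
    using tfd_chart_pieceD(4)[OF L] unfolding AE_lebesgue_on_iff_negligible[OF J] by blast
  have "tfd_velocity D g T c \<gamma> {p..q} s" if "s \<in> {p..q} - N" for s
    using N(2)[of s] that sub has_vector_derivative_within_subset unfolding tfd_velocity_def by blast
  then show "AE s in lebesgue_on {p..q}. tfd_velocity D g T c \<gamma> {p..q} s"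
    unfolding AE_lebesgue_on_iff_negligible[OF sets_lebesgue_Icc] using N(1) by blast
  show "(\<lambda>s. (norm (vector_derivative ?f (at s within {p..q})))\<^sup>2) integrable_on {p..q}"
  proof (cases "p < q")
    case False
    then have "negligible {p..q}"
      by (cases "p = q") simp_all
    then show ?thesis
      by (rule integrable_negligible)
  next
    case True
    have same: "vector_derivative ?f (at s within {p..q}) = vector_derivative ?f (at s within J)"
      if s: "s \<in> {p..q} - N" for s
    proof -
      obtain v where v: "(?f has_vector_derivative v) (at s within J)"
        using N(2)[of s] s sub unfolding tfd_velocity_def by blast
      have "vector_derivative ?f (at s within J) = v"
        using vector_derivative_within[OF trivial_limit_within_Icc_subset[OF True _ sub] v] s by simp
      moreover have "vector_derivative ?f (at s within {p..q}) = v"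
        using vector_derivative_within[OF trivial_limit_within_Icc_subset[OF True _ order_refl]
            has_vector_derivative_within_subset[OF v sub]] s by simp
      ultimately show ?thesis by simp
    qed
    have "(\<lambda>s. (norm (vector_derivative ?f (at s within J)))\<^sup>2) integrable_on {p..q}"
      using integrable_on_subinterval[OF tfd_chart_pieceD(3)[OF L]] sub by simp
    then show ?thesis
      by (rule integrable_spike[OF _ N(1)]) (simp add: same)
  qed
qed

lemma tfd_chart_piece_cong:
  assumes L: "tfd_chart_piece D g T c \<gamma> J" and eq: "\<And>s. s \<in> J \<Longrightarrow> \<gamma>' s = \<gamma> s"
  shows "tfd_chart_piece D g T c \<gamma>' J"
proof (rule tfd_chart_pieceI)
  have eqf: "(snd c \<circ> \<gamma>') s = (snd c \<circ> \<gamma>) s" if "s \<in> J" for s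
    using eq that by simp
  have deriv: "((snd c \<circ> \<gamma>') has_vector_derivative v) (at s within J) \<longleftrightarrow>
               ((snd c \<circ> \<gamma>) has_vector_derivative v) (at s within J)" if "s \<in> J" for s v
    using has_vector_derivative_transform[of s J "snd c \<circ> \<gamma>" "snd c \<circ> \<gamma>'"]
      has_vector_derivative_transform[of s J "snd c \<circ> \<gamma>'" "snd c \<circ> \<gamma>"] eqf that
    by (metis (full_types))
  show "\<gamma>' ` J \<subseteq> fst c"
    using tfd_chart_pieceD(1)[OF L] eq by auto
  show "abs_continuous_on J (snd c \<circ> \<gamma>')"
    using abs_continuous_on_cong[OF tfd_chart_pieceD(2)[OF L] eqf] .
  have same: "vector_derivative (snd c \<circ> \<gamma>') (at s within J) = vector_derivative (snd c \<circ> \<gamma>) (at s within J)"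
    if "s \<in> J" for s
    unfolding vector_derivative_def using deriv[OF that] by simp
  show "(\<lambda>s. (norm (vector_derivative (snd c \<circ> \<gamma>') (at s within J)))\<^sup>2) integrable_on J"
    using tfd_chart_pieceD(3)[OF L] by (rule integrable_spike[OF _ negligible_empty]) (simp add: same)
  have "AE s in lebesgue_on J. s \<in> J"
    by (rule AE_I2) (simp add: space_restrict_space)
  with tfd_chart_pieceD(4)[OF L] show "AE s in lebesgue_on J. tfd_velocity D g T c \<gamma>' J s"
    by eventually_elim (simp add: tfd_velocity_def deriv eq)
qed

lemma tfd_chart_piece_translate:
  assumes L: "tfd_chart_piece D g T c \<gamma> {p..q}"
  shows "tfd_chart_piece D g T c (\<lambda>s. \<gamma> (s - h)) {p+h..q+h}"
proof (rule tfd_chart_pieceI)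
  let ?f = "snd c \<circ> \<gamma>" and ?f' = "snd c \<circ> (\<lambda>s. \<gamma> (s - h))"
  have image: "(\<lambda>s. s + h) ` {p..q} = {p+h..q+h}"
    by simp
  have deriv: "(?f' has_vector_derivative v) (at s within {p+h..q+h}) \<longleftrightarrow>
               (?f has_vector_derivative v) (at (s - h) within {p..q})" for s v
    using has_vector_derivative_translate_iff[of ?f h v s "{p..q}"] unfolding image by (simp add: o_def)
  have same: "vector_derivative ?f' (at (h + s) within {p+h..q+h}) = vector_derivative ?f (at s within {p..q})"
    for s unfolding vector_derivative_def deriv by simp
  show "(\<lambda>s. \<gamma> (s - h)) ` {p+h..q+h} \<subseteq> fst c"
    using tfd_chart_pieceD(1)[OF L] by force
  show "abs_continuous_on {p+h..q+h} ?f'"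
    using abs_continuous_on_translate[OF tfd_chart_pieceD(2)[OF L], of h] unfolding image by (simp add: o_def)
  have "(\<lambda>s. (norm (vector_derivative ?f' (at (h + s) within {p+h..q+h})))\<^sup>2) integrable_on {p..q}"
    unfolding same by (rule tfd_chart_pieceD(3)[OF L])
  then have "((\<lambda>s. (norm (vector_derivative ?f' (at s within {p+h..q+h})))\<^sup>2) \<circ> (+) h) integrable_on {p..q}"
    by (simp add: comp_def)
  then show "(\<lambda>s. (norm (vector_derivative ?f' (at s within {p+h..q+h})))\<^sup>2) integrable_on {p+h..q+h}"
    unfolding integrable_on_shift_Icc_real .
  obtain N where N: "negligible N" "\<And>s. s \<in> {p..q} - N \<Longrightarrow> tfd_velocity D g T c \<gamma> {p..q} s"
    using tfd_chart_pieceD(4)[OF L] unfolding AE_lebesgue_on_iff_negligible[OF sets_lebesgue_Icc] by blast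
  have "tfd_velocity D g T c (\<lambda>s. \<gamma> (s - h)) {p+h..q+h} s" if s: "s \<in> {p+h..q+h} - (+) h ` N" for s
  proof -
    have "s - h \<in> {p..q} - N"
      using s by (force simp: image_iff)
    then show ?thesis
      using N(2) deriv unfolding tfd_velocity_def by simp
  qed
  then show "AE s in lebesgue_on {p+h..q+h}. tfd_velocity D g T c (\<lambda>s. \<gamma> (s - h)) {p+h..q+h} s"
    unfolding AE_lebesgue_on_iff_negligible[OF sets_lebesgue_Icc]
    using negligible_translation[OF N(1)] by blast
qed

lemma tfd_chart_piece_join:
  assumes L1: "tfd_chart_piece D g T c \<gamma> {u..b}" and L2: "tfd_chart_piece D g T c \<gamma> {b..w}"
    and "u \<le> b" "b \<le> w"
  shows "tfd_chart_piece D g T c \<gamma> {u..w}"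
proof (rule tfd_chart_pieceI)
  let ?f = "snd c \<circ> \<gamma>"
  have "{u..w} = {u..b} \<union> {b..w}"
    using assms(3,4) by auto
  then show "\<gamma> ` {u..w} \<subseteq> fst c"
    using tfd_chart_pieceD(1)[OF L1] tfd_chart_pieceD(1)[OF L2] by auto
  show "abs_continuous_on {u..w} ?f"
    using abs_continuous_on_join[OF tfd_chart_pieceD(2)[OF L1] tfd_chart_pieceD(2)[OF L2] assms(3,4)] .
  have "(\<lambda>s. (norm (vector_derivative ?f (at s within {u..w})))\<^sup>2) integrable_on {u..b}"
    using tfd_chart_pieceD(3)[OF L1]
    by (rule integrable_spike[OF _ negligible_sing[of b]]) (simp add: at_within_Icc_left[OF _ assms(4)])
  moreover have "(\<lambda>s. (norm (vector_derivative ?f (at s within {u..w})))\<^sup>2) integrable_on {b..w}"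
    using tfd_chart_pieceD(3)[OF L2]
    by (rule integrable_spike[OF _ negligible_sing[of b]]) (simp add: at_within_Icc_right[OF _ assms(3)])
  ultimately show "(\<lambda>s. (norm (vector_derivative ?f (at s within {u..w})))\<^sup>2) integrable_on {u..w}"
    using Henstock_Kurzweil_Integration.integrable_combine[OF assms(3,4)] by blast
  obtain N1 where N1: "negligible N1" "\<And>s. s \<in> {u..b} - N1 \<Longrightarrow> tfd_velocity D g T c \<gamma> {u..b} s"
    using tfd_chart_pieceD(4)[OF L1] unfolding AE_lebesgue_on_iff_negligible[OF sets_lebesgue_Icc] by blast
  obtain N2 where N2: "negligible N2" "\<And>s. s \<in> {b..w} - N2 \<Longrightarrow> tfd_velocity D g T c \<gamma> {b..w} s"
    using tfd_chart_pieceD(4)[OF L2] unfolding AE_lebesgue_on_iff_negligible[OF sets_lebesgue_Icc] by blast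
  have "tfd_velocity D g T c \<gamma> {u..w} s" if s: "s \<in> {u..w} - (N1 \<union> N2 \<union> {b})" for s
  proof (cases "s < b")
    case True
    then show ?thesis
      using N1(2) s unfolding tfd_velocity_def at_within_Icc_left[OF True assms(4)] by auto
  next
    case False
    then have "b < s" using s by auto
    then show ?thesis
      using N2(2) s unfolding tfd_velocity_def at_within_Icc_right[OF \<open>b < s\<close> assms(3)] by auto
  qed
  then show "AE s in lebesgue_on {u..w}. tfd_velocity D g T c \<gamma> {u..w} s"
    unfolding AE_lebesgue_on_iff_negligible[OF sets_lebesgue_Icc]
    using N1(1) N2(1) by (meson negligible_Un negligible_sing)
qed

lemma tfd_chart_piece_imp_continuous_on:
  assumes atlas: "smooth_atlas A" and "c \<in> A" and L: "tfd_chart_piece D g T c \<gamma> J" and "is_interval J"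
  shows "continuous_on J \<gamma>"
proof -
  have inj: "inj_on (snd c) (fst c)" and "continuous_on (snd c ` fst c) (chart_inv c)"
    using atlas \<open>c \<in> A\<close> unfolding smooth_atlas_def by blast+
  moreover have "continuous_on J (snd c \<circ> \<gamma>)"
    using abs_continuous_on_imp_continuous_on[OF tfd_chart_pieceD(2)[OF L] \<open>is_interval J\<close>] .
  moreover have "(snd c \<circ> \<gamma>) ` J \<subseteq> snd c ` fst c"
    using tfd_chart_pieceD(1)[OF L] by auto
  ultimately have "continuous_on J (chart_inv c \<circ> (snd c \<circ> \<gamma>))"
    using continuous_on_compose continuous_on_subset by blast
  moreover have "(chart_inv c \<circ> (snd c \<circ> \<gamma>)) s = \<gamma> s" if "s \<in> J" for s
    using tfd_chart_pieceD(1)[OF L] that inv_into_f_f[OF inj] unfolding chart_inv_def by auto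
  ultimately show ?thesis
    using continuous_on_eq by blast
qed

lemma transition_apply:
  assumes "inj_on (snd c) (fst c)" "x \<in> fst c"
  shows "transition c c' (snd c x) = snd c' x"
  using assms unfolding transition_def chart_inv_def by simp

lemma tfd_velocity_change_chart:
  assumes sst: "sub_space_time A D k g T" and "c \<in> A" "c' \<in> A" and p: "\<gamma> s \<in> fst c \<inter> fst c'"
    and v: "v \<in> D c (\<gamma> s)" "g c (\<gamma> s) v v < 0" "g c (\<gamma> s) (T c (\<gamma> s)) v < 0"
    and deriv: "((snd c' \<circ> \<gamma>) has_vector_derivative chart_change c c' (\<gamma> s) v) (at s within J)"
  shows "tfd_velocity D g T c' \<gamma> J s"
  unfolding tfd_velocity_def
proof (intro exI conjI)
  let ?L = "chart_change c c' (\<gamma> s)"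
  have SD: "smooth_distribution A D k" and SM: "smooth_metric A D g" and TO: "time_orientation A D g T"
    using sst unfolding sub_space_time_def by blast+
  have D: "D c' (\<gamma> s) = ?L ` D c (\<gamma> s)"
    using SD \<open>c \<in> A\<close> \<open>c' \<in> A\<close> p unfolding smooth_distribution_def by blast
  have g: "g c' (\<gamma> s) (?L u) (?L w) = g c (\<gamma> s) u w" if "u \<in> D c (\<gamma> s)" "w \<in> D c (\<gamma> s)" for u w
    using SM \<open>c \<in> A\<close> \<open>c' \<in> A\<close> p that unfolding smooth_metric_def by blast
  have T: "T c' (\<gamma> s) = ?L (T c (\<gamma> s))" "T c (\<gamma> s) \<in> D c (\<gamma> s)"
    using TO \<open>c \<in> A\<close> \<open>c' \<in> A\<close> p unfolding time_orientation_def by blast+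
  show "((snd c' \<circ> \<gamma>) has_vector_derivative ?L v) (at s within J)"
    by (rule deriv)
  show "?L v \<in> D c' (\<gamma> s)"
    using D v(1) by simp
  show "g c' (\<gamma> s) (?L v) (?L v) < 0"
    using g[OF v(1) v(1)] v(2) by simp
  show "g c' (\<gamma> s) (T c' (\<gamma> s)) (?L v) < 0"
    using g[OF T(2) v(1)] T(1) v(3) by simp
qed

lemma tfd_chart_piece_change_chart:
  assumes sst: "sub_space_time A D k g T" and cA: "c \<in> A" "c' \<in> A" and "p < q"
    and L: "tfd_chart_piece D g T c \<gamma> {p..q}" and sub: "\<gamma> ` {p..q} \<subseteq> fst c'"
  shows "tfd_chart_piece D g T c' \<gamma> {p..q}"
proof (rule tfd_chart_pieceI)
  let ?J = "{p..q}" and ?f = "snd c \<circ> \<gamma>" and ?f' = "snd c' \<circ> \<gamma>"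
  let ?h = "transition c c'" and ?W = "snd c ` (fst c \<inter> fst c')"
  let ?Dh = "\<lambda>x. frechet_derivative ?h (at x)"
  have atlas: "smooth_atlas A"
    using sst unfolding sub_space_time_def by blast
  have inj: "inj_on (snd c) (fst c)" and "smooth_on ?W ?h"
    using atlas cA unfolding smooth_atlas_def by blast+
  then have "open ?W" and C1: "Ck_on (Suc 0) ?W ?h"
    unfolding smooth_on_def by blast+
  then have diff: "\<And>x. x \<in> ?W \<Longrightarrow> ?h differentiable (at x)"
    and contD: "\<And>w. continuous_on ?W (\<lambda>x. ?Dh x w)" by auto
  have img: "\<gamma> ` ?J \<subseteq> fst c"
    by (rule tfd_chart_pieceD(1)[OF L])
  have fW: "?f ` ?J \<subseteq> ?W"
    using img sub by auto
  have hf: "?h (?f s) = ?f' s" if "s \<in> ?J" for s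
  proof -
    have "\<gamma> s \<in> fst c" using img that by auto
    then show ?thesis using transition_apply[OF inj] by simp
  qed
  have contf: "continuous_on ?J ?f"
    using abs_continuous_on_imp_continuous_on[OF tfd_chart_pieceD(2)[OF L]] by (simp add: is_interval_cc)
  obtain r M where "r > 0" "M \<ge> 0"
    and DM: "\<And>x w. x \<in> ?f ` ?J \<Longrightarrow> norm (?Dh x w) \<le> M * norm w"
    and hM: "\<And>x y. x \<in> ?f ` ?J \<Longrightarrow> norm (y - x) \<le> r \<Longrightarrow> norm (?h y - ?h x) \<le> M * norm (y - x)"
    by (rule derivative_bounds_on_compact[OF \<open>open ?W\<close> compact_continuous_image[OF contf compact_Icc] fW diff contD]) (assumption | rule that)+
  show "\<gamma> ` ?J \<subseteq> fst c'"
    by (rule sub)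
  have "abs_continuous_on ?J (?h \<circ> ?f)"
    by (rule abs_continuous_on_compose_Lipschitz[OF tfd_chart_pieceD(2)[OF L] \<open>r > 0\<close> \<open>M \<ge> 0\<close> hM])
  then show ac: "abs_continuous_on ?J ?f'"
    by (rule abs_continuous_on_cong) (use hf in simp)
  obtain N where N: "negligible N" "\<And>s. s \<in> ?J - N \<Longrightarrow> tfd_velocity D g T c \<gamma> ?J s"
    using tfd_chart_pieceD(4)[OF L] unfolding AE_lebesgue_on_iff_negligible[OF sets_lebesgue_Icc] by blast
  have velocity: "\<exists>v. vector_derivative ?f (at s within ?J) = v \<and>
      (?f' has_vector_derivative ?Dh (?f s) v) (at s within ?J) \<and> tfd_velocity D g T c' \<gamma> ?J s"
    if s: "s \<in> ?J - N" for s
  proof -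
    obtain v where v: "(?f has_vector_derivative v) (at s within ?J)"
      "v \<in> D c (\<gamma> s)" "g c (\<gamma> s) v v < 0" "g c (\<gamma> s) (T c (\<gamma> s)) v < 0"
      using N(2)[OF s] unfolding tfd_velocity_def by blast
    have "(?h has_derivative ?Dh (?f s)) (at (?f s))"
      using diff fW s frechet_derivative_works by blast
    then have chain: "((?h \<circ> ?f) has_vector_derivative ?Dh (?f s) v) (at s within ?J)"
      using vector_derivative_diff_chain_within[OF v(1) has_derivative_at_withinI] by blast
    have deriv: "(?f' has_vector_derivative ?Dh (?f s) v) (at s within ?J)"
      by (rule has_vector_derivative_transform[OF _ _ chain]) (use hf s in auto)
    have "\<gamma> s \<in> fst c \<inter> fst c'"
      using img sub s by auto
    from tfd_velocity_change_chart[where \<gamma>=\<gamma> and s=s, OF sst cA this v(2-4)] deriv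
    have "tfd_velocity D g T c' \<gamma> ?J s"
      unfolding chart_change_def by simp
    moreover have "vector_derivative ?f (at s within ?J) = v"
      using vector_derivative_within[OF trivial_limit_within_Icc_subset[OF \<open>p < q\<close> _ order_refl] v(1)] s by simp
    ultimately show ?thesis
      using deriv by blast
  qed
  then show "AE s in lebesgue_on ?J. tfd_velocity D g T c' \<gamma> ?J s"
    unfolding AE_lebesgue_on_iff_negligible[OF sets_lebesgue_Icc] using N(1) by blast
  show "(\<lambda>s. (norm (vector_derivative ?f' (at s within ?J)))\<^sup>2) integrable_on ?J"
  proof (rule square_integrable_vector_derivative_dominated[OF \<open>p < q\<close> _ N(1)])
    show "continuous_on ?J ?f'"
      using abs_continuous_on_imp_continuous_on[OF ac] by (simp add: is_interval_cc)
    show "\<exists>w. (?f' has_vector_derivative w) (at s within ?J)" if "s \<in> ?J - N" for s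
      using velocity[OF that] by blast
    show "norm (vector_derivative ?f' (at s within ?J)) \<le> M * norm (vector_derivative ?f (at s within ?J))"
      if s: "s \<in> ?J - N" for s
    proof -
      obtain v where v: "vector_derivative ?f (at s within ?J) = v"
        "(?f' has_vector_derivative ?Dh (?f s) v) (at s within ?J)"
        using velocity[OF s] by blast
      have "vector_derivative ?f' (at s within ?J) = ?Dh (?f s) v"
        using vector_derivative_within[OF trivial_limit_within_Icc_subset[OF \<open>p < q\<close> _ order_refl] v(2)] s by simp
      then show ?thesis
        using DM[of "?f s" v] s v(1) by simp
    qed
  qed (rule tfd_chart_pieceD(3)[OF L])
qed

section \<open>Restriction, translation and concatenation of curves\<close>

lemma is_interval_tfd_curve: "tfd_curve A D g T I \<gamma> \<Longrightarrow> is_interval I"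
  unfolding tfd_curve_def by blast

lemma tfd_curve_subinterval:
  assumes tfd: "tfd_curve A D g T I \<gamma>" and "u \<in> I" "v \<in> I"
  shows "tfd_curve A D g T {u..v} \<gamma>"
  unfolding tfd_curve_iff_chart_pieces
proof (intro conjI ballI)
  show "is_interval {u..v}"
    by (simp add: is_interval_cc)
  fix t assume t: "t \<in> {u..v}"
  have I: "is_interval I"
    by (rule is_interval_tfd_curve[OF tfd])
  then have uv: "{u..v} \<subseteq> I"
    using assms(2,3) unfolding is_interval_1 by (meson atLeastAtMost_iff subsetI)
  obtain c e where "c \<in> A" "e > 0" and L: "tfd_chart_piece D g T c \<gamma> (I \<inter> cball t e)"
    using tfd t uv unfolding tfd_curve_iff_chart_pieces by blast
  have "{max u (t - e)..min v (t + e)} \<subseteq> I \<inter> cball t e"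
    using uv Icc_Int_cball[of u v t e] by blast
  then have "tfd_chart_piece D g T c \<gamma> ({u..v} \<inter> cball t e)"
    unfolding Icc_Int_cball by (rule tfd_chart_piece_subinterval[OF L is_interval_Int_cball_in_sets_lebesgue[OF I]])
  then show "\<exists>c\<in>A. \<exists>\<epsilon>>0. tfd_chart_piece D g T c \<gamma> ({u..v} \<inter> cball t \<epsilon>)"
    using \<open>c \<in> A\<close> \<open>e > 0\<close> by blast
qed

lemma chron_rel_tfd_curve:
  assumes "tfd_curve A D g T I \<gamma>" "u < v" "u \<in> I" "v \<in> I"
  shows "chron_rel A D g T (\<gamma> u) (\<gamma> v)"
  unfolding chron_rel_def using tfd_curve_subinterval[OF assms(1,3,4)] assms(2) by blast

lemma tfd_curve_translate:
  assumes tfd: "tfd_curve A D g T {a..b} \<gamma>"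
  shows "tfd_curve A D g T {a+h..b+h} (\<lambda>s. \<gamma> (s - h))"
  unfolding tfd_curve_iff_chart_pieces
proof (intro conjI ballI)
  show "is_interval {a+h..b+h}"
    by (simp add: is_interval_cc)
  fix t assume "t \<in> {a+h..b+h}"
  then have "t - h \<in> {a..b}" by auto
  then obtain c e where "c \<in> A" "e > 0" and L: "tfd_chart_piece D g T c \<gamma> ({a..b} \<inter> cball (t - h) e)"
    using tfd unfolding tfd_curve_iff_chart_pieces by blast
  have "max a (t - h - e) + h = max (a + h) (t - e)" "min b (t - h + e) + h = min (b + h) (t + e)"
    by (simp_all add: max_def min_def)
  then have "tfd_chart_piece D g T c (\<lambda>s. \<gamma> (s - h)) ({a+h..b+h} \<inter> cball t e)"
    using tfd_chart_piece_translate[of D g T c \<gamma> "max a (t - h - e)" "min b (t - h + e)" h] L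
    unfolding Icc_Int_cball by simp
  then show "\<exists>c\<in>A. \<exists>\<epsilon>>0. tfd_chart_piece D g T c (\<lambda>s. \<gamma> (s - h)) ({a+h..b+h} \<inter> cball t \<epsilon>)"
    using \<open>c \<in> A\<close> \<open>e > 0\<close> by blast
qed

lemma tfd_curve_chart_pieces_near:
  assumes "tfd_curve A D g T {a..b} \<gamma>" "t \<in> {a..b}"
  obtains c \<epsilon> where "c \<in> A" "\<epsilon> > 0"
    "\<And>p q. {p..q} \<subseteq> {a..b} \<inter> cball t \<epsilon> \<Longrightarrow> tfd_chart_piece D g T c \<gamma> {p..q}"
proof -
  obtain c \<epsilon> where "c \<in> A" "\<epsilon> > 0" and L: "tfd_chart_piece D g T c \<gamma> ({a..b} \<inter> cball t \<epsilon>)"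
    using assms unfolding tfd_curve_iff_chart_pieces by blast
  have "{a..b} \<inter> cball t \<epsilon> \<in> sets lebesgue"
    by (rule is_interval_Int_cball_in_sets_lebesgue) (simp add: is_interval_cc)
  then show thesis
    using that[OF \<open>c \<in> A\<close> \<open>\<epsilon> > 0\<close>] tfd_chart_piece_subinterval[OF L] by blast
qed

lemma tfd_curves_join_chart_piece:
  assumes sst: "sub_space_time A D k g T" and "a < b" "b < d"
    and G: "tfd_curve A D g T {a..b} \<gamma>" and S: "tfd_curve A D g T {b..d} \<sigma>" and eq: "\<gamma> b = \<sigma> b"
  obtains c \<epsilon> where "c \<in> A" "0 < \<epsilon>" "\<epsilon> \<le> b - a" "\<epsilon> \<le> d - b"
    "tfd_chart_piece D g T c (\<lambda>s. if s \<le> b then \<gamma> s else \<sigma> s) {b - \<epsilon>..b + \<epsilon>}"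
proof -
  let ?\<rho> = "\<lambda>s. if s \<le> b then \<gamma> s else \<sigma> s"
  \<comment> \<open>Shrink the chart piece of \<open>\<sigma>\<close> at \<open>b\<close> until it lies in the chart \<open>c\<close> of \<open>\<gamma>\<close>, then change charts.\<close>
  have atlas: "smooth_atlas A"
    using sst unfolding sub_space_time_def by blast
  have "b \<in> {a..b}" "b \<in> {b..d}"
    using \<open>a < b\<close> \<open>b < d\<close> by auto
  obtain c e1 where "c \<in> A" "e1 > 0"
    and L\<gamma>: "\<And>p q. {p..q} \<subseteq> {a..b} \<inter> cball b e1 \<Longrightarrow> tfd_chart_piece D g T c \<gamma> {p..q}"
    by (rule tfd_curve_chart_pieces_near[OF G \<open>b \<in> {a..b}\<close>]) (assumption | rule that)+
  obtain c2 e2 where "c2 \<in> A" "e2 > 0"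
    and L\<sigma>: "\<And>p q. {p..q} \<subseteq> {b..d} \<inter> cball b e2 \<Longrightarrow> tfd_chart_piece D g T c2 \<sigma> {p..q}"
    by (rule tfd_curve_chart_pieces_near[OF S \<open>b \<in> {b..d}\<close>]) (assumption | rule that)+
  define e where "e = min e2 (d - b)"
  have e: "e > 0" "{b..b + e} \<subseteq> {b..d} \<inter> cball b e2"
    using \<open>e2 > 0\<close> \<open>b < d\<close> unfolding e_def Icc_Int_cball by auto
  have "\<sigma> b \<in> fst c"
    using tfd_chart_pieceD(1)[OF L\<gamma>[of b b]] \<open>e1 > 0\<close> \<open>a < b\<close> eq by auto
  moreover have "open (fst c)"
    using atlas \<open>c \<in> A\<close> unfolding smooth_atlas_def by blast
  moreover have "continuous_on {b..b + e} \<sigma>"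
    using tfd_chart_piece_imp_continuous_on[OF atlas \<open>c2 \<in> A\<close> L\<sigma>[OF e(2)]] by (simp add: is_interval_cc)
  ultimately obtain U where "open U" "b \<in> U" and U: "\<And>s. s \<in> {b..b + e} \<Longrightarrow> s \<in> U \<Longrightarrow> \<sigma> s \<in> fst c"
    using e(1) unfolding continuous_on_topological by (metis atLeastAtMost_iff less_eq_real_def add_increasing2 order_refl)
  then obtain \<delta> where "\<delta> > 0" "ball b \<delta> \<subseteq> U"
    using open_contains_ball by blast
  define \<epsilon> where "\<epsilon> = min (min (\<delta> / 2) e) (min e1 (b - a))"
  have \<epsilon>: "\<epsilon> > 0" "\<epsilon> < \<delta>" "\<epsilon> \<le> e" "\<epsilon> \<le> e1" "\<epsilon> \<le> b - a"
    using \<open>\<delta> > 0\<close> e(1) \<open>e1 > 0\<close> \<open>a < b\<close> unfolding \<epsilon>_def by auto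
  have "\<sigma> ` {b..b + \<epsilon>} \<subseteq> fst c"
  proof
    fix y assume "y \<in> \<sigma> ` {b..b + \<epsilon>}"
    then obtain s where s: "s \<in> {b..b + \<epsilon>}" "y = \<sigma> s" by blast
    then have "s \<in> ball b \<delta>" "s \<in> {b..b + e}"
      using \<epsilon> by (auto simp: dist_real_def)
    then show "y \<in> fst c"
      using U \<open>ball b \<delta> \<subseteq> U\<close> s(2) by blast
  qed
  moreover have "tfd_chart_piece D g T c2 \<sigma> {b..b + \<epsilon>}"
    using L\<sigma> e(2) \<epsilon>(3) by (meson atLeastatMost_subset_iff order_trans add_left_mono order_refl)
  ultimately have "tfd_chart_piece D g T c \<sigma> {b..b + \<epsilon>}"
    using tfd_chart_piece_change_chart[OF sst \<open>c2 \<in> A\<close> \<open>c \<in> A\<close>] \<epsilon>(1) by simp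
  then have right: "tfd_chart_piece D g T c ?\<rho> {b..b + \<epsilon>}"
    by (rule tfd_chart_piece_cong) (use eq in auto)
  have "{b - \<epsilon>..b} \<subseteq> {a..b} \<inter> cball b e1"
    using \<epsilon> unfolding Icc_Int_cball by auto
  then have left: "tfd_chart_piece D g T c ?\<rho> {b - \<epsilon>..b}"
    by (rule tfd_chart_piece_cong[OF L\<gamma>]) auto
  show thesis
  proof (rule that[OF \<open>c \<in> A\<close> \<epsilon>(1,5)])
    show "\<epsilon> \<le> d - b"
      using \<epsilon>(3) unfolding e_def by simp
    show "tfd_chart_piece D g T c ?\<rho> {b - \<epsilon>..b + \<epsilon>}"
      by (rule tfd_chart_piece_join[OF left right]) (use \<epsilon>(1) in auto)
  qed
qed

lemma tfd_curve_join:
  assumes sst: "sub_space_time A D k g T" and "a < b" "b < d"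
    and G: "tfd_curve A D g T {a..b} \<gamma>" and S: "tfd_curve A D g T {b..d} \<sigma>" and eq: "\<gamma> b = \<sigma> b"
  shows "tfd_curve A D g T {a..d} (\<lambda>s. if s \<le> b then \<gamma> s else \<sigma> s)"
  unfolding tfd_curve_iff_chart_pieces
proof (intro conjI ballI)
  let ?\<rho> = "\<lambda>s. if s \<le> b then \<gamma> s else \<sigma> s"
  show "is_interval {a..d}"
    by (simp add: is_interval_cc)
  fix t assume t: "t \<in> {a..d}"
  consider "t < b" | "b < t" | "t = b" by linarith
  then show "\<exists>c\<in>A. \<exists>\<epsilon>>0. tfd_chart_piece D g T c ?\<rho> ({a..d} \<inter> cball t \<epsilon>)"
  proof cases
    case 1
    then have "t \<in> {a..b}" using t by simp
    obtain c e where "c \<in> A" "e > 0"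
      and L: "\<And>p q. {p..q} \<subseteq> {a..b} \<inter> cball t e \<Longrightarrow> tfd_chart_piece D g T c \<gamma> {p..q}"
      by (rule tfd_curve_chart_pieces_near[OF G \<open>t \<in> {a..b}\<close>]) (assumption | rule that)+
    define \<epsilon> where "\<epsilon> = min e (b - t)"
    have "\<epsilon> > 0"
      using \<open>e > 0\<close> 1 unfolding \<epsilon>_def by simp
    have sub: "{max a (t - \<epsilon>)..min d (t + \<epsilon>)} \<subseteq> {a..b} \<inter> cball t e"
      unfolding \<epsilon>_def Icc_Int_cball by (auto simp: dist_real_def abs_le_iff)
    have "tfd_chart_piece D g T c ?\<rho> ({a..d} \<inter> cball t \<epsilon>)"
      unfolding Icc_Int_cball by (rule tfd_chart_piece_cong[OF L[OF sub]]) (auto simp: \<epsilon>_def)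
    then show ?thesis
      using \<open>c \<in> A\<close> \<open>\<epsilon> > 0\<close> by blast
  next
    case 2
    then have "t \<in> {b..d}" using t by simp
    obtain c e where "c \<in> A" "e > 0"
      and L: "\<And>p q. {p..q} \<subseteq> {b..d} \<inter> cball t e \<Longrightarrow> tfd_chart_piece D g T c \<sigma> {p..q}"
      by (rule tfd_curve_chart_pieces_near[OF S \<open>t \<in> {b..d}\<close>]) (assumption | rule that)+
    define \<epsilon> where "\<epsilon> = min e (t - b)"
    have "\<epsilon> > 0"
      using \<open>e > 0\<close> 2 unfolding \<epsilon>_def by simp
    have sub: "{max a (t - \<epsilon>)..min d (t + \<epsilon>)} \<subseteq> {b..d} \<inter> cball t e"
      unfolding \<epsilon>_def Icc_Int_cball by (auto simp: dist_real_def abs_le_iff)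
    have "tfd_chart_piece D g T c ?\<rho> ({a..d} \<inter> cball t \<epsilon>)"
      unfolding Icc_Int_cball
    proof (rule tfd_chart_piece_cong[OF L[OF sub]])
      fix s assume "s \<in> {max a (t - \<epsilon>)..min d (t + \<epsilon>)}"
      then have "b \<le> s"
        using min.cobounded2[of e "t - b"] unfolding \<epsilon>_def by auto
      then show "?\<rho> s = \<sigma> s"
        using eq by (cases "s = b") auto
    qed
    then show ?thesis
      using \<open>c \<in> A\<close> \<open>\<epsilon> > 0\<close> by blast
  next
    case 3
    obtain c \<epsilon> where "c \<in> A" "0 < \<epsilon>" "\<epsilon> \<le> b - a" "\<epsilon> \<le> d - b"
      and L: "tfd_chart_piece D g T c ?\<rho> {b - \<epsilon>..b + \<epsilon>}"
      by (rule tfd_curves_join_chart_piece[OF sst \<open>a < b\<close> \<open>b < d\<close> G S eq]) (assumption | rule that)+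
    have "{a..d} \<inter> cball t \<epsilon> = {b - \<epsilon>..b + \<epsilon>}"
      using 3 \<open>\<epsilon> \<le> b - a\<close> \<open>\<epsilon> \<le> d - b\<close> unfolding Icc_Int_cball by simp
    then have "tfd_chart_piece D g T c ?\<rho> ({a..d} \<inter> cball t \<epsilon>)"
      using L by simp
    then show ?thesis
      using \<open>c \<in> A\<close> \<open>0 < \<epsilon>\<close> by blast
  qed
qed

lemma chron_rel_trans:
  assumes sst: "sub_space_time A D k g T"
    and "chron_rel A D g T p q" "chron_rel A D g T q r"
  shows "chron_rel A D g T p r"
proof -
  obtain a b \<gamma> where "a < b" and G: "tfd_curve A D g T {a..b} \<gamma>" and "\<gamma> a = p" "\<gamma> b = q"
    using assms(2) unfolding chron_rel_def by blast
  obtain c d \<sigma> where "c < d" and S: "tfd_curve A D g T {c..d} \<sigma>" and "\<sigma> c = q" "\<sigma> d = r"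
    using assms(3) unfolding chron_rel_def by blast
  let ?d = "d + (b - c)"
  have "tfd_curve A D g T {b..?d} (\<lambda>s. \<sigma> (s - (b - c)))"
    using tfd_curve_translate[OF S, of "b - c"] by simp
  then have "tfd_curve A D g T {a..?d} (\<lambda>s. if s \<le> b then \<gamma> s else \<sigma> (s - (b - c)))"
    using tfd_curve_join[OF sst \<open>a < b\<close> _ G] \<open>c < d\<close> \<open>\<gamma> b = q\<close> \<open>\<sigma> c = q\<close> by simp
  then show ?thesis
    unfolding chron_rel_def using \<open>a < b\<close> \<open>c < d\<close> \<open>\<gamma> a = p\<close> \<open>\<sigma> d = r\<close>
    by (intro exI[of _ a] exI[of _ ?d]) auto
qed

section \<open>The Alexandrov topology along curves\<close>

lemma openin_alexandrov_topology:
  shows openin_alexandrov_UNIV: "openin (alexandrov_topology A D g T) UNIV"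
    and openin_alexandrov_I_plus: "openin (alexandrov_topology A D g T) (I_plus A D g T p)"
    and openin_alexandrov_I_minus: "openin (alexandrov_topology A D g T) (I_minus A D g T p)"
  unfolding alexandrov_topology_def
  by (simp_all add: openin_topology_generated_by_iff generate_topology_on.Basis)

lemma chronological_tfd_curve_monotone:
  assumes sst: "sub_space_time A D k g T" and chr: "chronological A D g T"
    and tfd: "tfd_curve A D g T I \<gamma>" and "s \<in> I" "t \<in> I" and R: "chron_rel A D g T (\<gamma> s) (\<gamma> t)"
  shows "s < t"
proof (rule ccontr)
  assume "\<not> s < t"
  then consider "s = t" | "t < s" by linarith
  then have "chron_rel A D g T (\<gamma> s) (\<gamma> s)"
  proof cases
    case 1
    then show ?thesis using R by simp
  next
    case 2
    show ?thesis
      using chron_rel_trans[OF sst R chron_rel_tfd_curve[OF tfd 2 \<open>t \<in> I\<close> \<open>s \<in> I\<close>]] .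
  qed
  then show False
    using chr unfolding chronological_def by blast
qed

lemma alexandrov_neighbourhood_bounded_below:
  assumes sst: "sub_space_time A D k g T" and chr: "chronological A D g T"
    and tfd: "tfd_curve A D g T I \<gamma>" and "t \<in> I" "r > 0"
  obtains U where "openin (alexandrov_topology A D g T) U" "\<gamma> t \<in> U"
    "\<And>s. s \<in> I \<Longrightarrow> \<gamma> s \<in> U \<Longrightarrow> t - r < s"
proof (cases "\<exists>t'\<in>I. t - r < t' \<and> t' < t")
  case True
  then obtain t' where t': "t' \<in> I" "t - r < t'" "t' < t" by blast
  show thesis
  proof (rule that[OF openin_alexandrov_I_plus])
    show "\<gamma> t \<in> I_plus A D g T (\<gamma> t')"
      unfolding I_plus_def using chron_rel_tfd_curve[OF tfd t'(3) t'(1) \<open>t \<in> I\<close>] by simp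
    show "t - r < s" if "s \<in> I" "\<gamma> s \<in> I_plus A D g T (\<gamma> t')" for s
      using chronological_tfd_curve_monotone[OF sst chr tfd t'(1) that(1)] that(2) t'(2)
      unfolding I_plus_def by simp
  qed
next
  case False
  show thesis
  proof (rule that[OF openin_alexandrov_UNIV])
    show "t - r < s" if "s \<in> I" for s
    proof (rule ccontr)
      assume "\<not> t - r < s"
      then have "t - r / 2 \<in> I"
        using mem_is_interval_1_I[OF is_interval_tfd_curve[OF tfd] that \<open>t \<in> I\<close>] \<open>r > 0\<close> by simp
      then show False
        using False \<open>r > 0\<close> by auto
    qed
  qed simp
qed

lemma alexandrov_neighbourhood_bounded_above:
  assumes sst: "sub_space_time A D k g T" and chr: "chronological A D g T"
    and tfd: "tfd_curve A D g T I \<gamma>" and "t \<in> I" "r > 0"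
  obtains U where "openin (alexandrov_topology A D g T) U" "\<gamma> t \<in> U"
    "\<And>s. s \<in> I \<Longrightarrow> \<gamma> s \<in> U \<Longrightarrow> s < t + r"
proof (cases "\<exists>t'\<in>I. t < t' \<and> t' < t + r")
  case True
  then obtain t' where t': "t' \<in> I" "t < t'" "t' < t + r" by blast
  show thesis
  proof (rule that[OF openin_alexandrov_I_minus])
    show "\<gamma> t \<in> I_minus A D g T (\<gamma> t')"
      unfolding I_minus_def using chron_rel_tfd_curve[OF tfd t'(2) \<open>t \<in> I\<close> t'(1)] by simp
    show "s < t + r" if "s \<in> I" "\<gamma> s \<in> I_minus A D g T (\<gamma> t')" for s
      using chronological_tfd_curve_monotone[OF sst chr tfd that(1) t'(1)] that(2) t'(3)
      unfolding I_minus_def by simp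
  qed
next
  case False
  show thesis
  proof (rule that[OF openin_alexandrov_UNIV])
    show "s < t + r" if "s \<in> I" for s
    proof (rule ccontr)
      assume "\<not> s < t + r"
      then have "t + r / 2 \<in> I"
        using mem_is_interval_1_I[OF is_interval_tfd_curve[OF tfd] \<open>t \<in> I\<close> that] \<open>r > 0\<close> by simp
      then show False
        using False \<open>r > 0\<close> by auto
    qed
  qed simp
qed

lemma chronological_imp_pullback_finer:
  assumes sst: "sub_space_time A D k g T" and chr: "chronological A D g T"
    and tfd: "tfd_curve A D g T I \<gamma>" and V: "openin (top_of_set I) V"
  shows "openin (pullback_topology I \<gamma> (alexandrov_topology A D g T)) V"
  unfolding openin_subopen[of _ V]
proof
  fix t assume "t \<in> V"
  obtain W where "open W" "V = I \<inter> W"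
    using V by (auto simp: openin_open)
  then obtain r where "r > 0" "ball t r \<subseteq> W" "t \<in> I"
    using \<open>t \<in> V\<close> open_contains_ball by blast
  obtain U1 where U1: "openin (alexandrov_topology A D g T) U1" "\<gamma> t \<in> U1"
    "\<And>s. s \<in> I \<Longrightarrow> \<gamma> s \<in> U1 \<Longrightarrow> t - r < s"
    by (rule alexandrov_neighbourhood_bounded_below[OF sst chr tfd \<open>t \<in> I\<close> \<open>r > 0\<close>]) (assumption | rule that)+
  obtain U2 where U2: "openin (alexandrov_topology A D g T) U2" "\<gamma> t \<in> U2"
    "\<And>s. s \<in> I \<Longrightarrow> \<gamma> s \<in> U2 \<Longrightarrow> s < t + r"
    by (rule alexandrov_neighbourhood_bounded_above[OF sst chr tfd \<open>t \<in> I\<close> \<open>r > 0\<close>]) (assumption | rule that)+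
  have "openin (pullback_topology I \<gamma> (alexandrov_topology A D g T)) (\<gamma> -` (U1 \<inter> U2) \<inter> I)"
    unfolding openin_pullback_topology using U1(1) U2(1) by blast
  moreover have "\<gamma> -` (U1 \<inter> U2) \<inter> I \<subseteq> V"
  proof
    fix s assume "s \<in> \<gamma> -` (U1 \<inter> U2) \<inter> I"
    then have "s \<in> I" "t - r < s" "s < t + r"
      using U1(3) U2(3) by auto
    then have "s \<in> I" "s \<in> ball t r"
      by (auto simp: dist_real_def)
    then show "s \<in> V"
      using \<open>ball t r \<subseteq> W\<close> \<open>V = I \<inter> W\<close> by blast
  qed
  ultimately show "\<exists>S. openin (pullback_topology I \<gamma> (alexandrov_topology A D g T)) S \<and> t \<in> S \<and> S \<subseteq> V"
    using U1(2) U2(2) \<open>t \<in> I\<close> by blast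
qed

lemma pullback_finer_imp_chronological:
  assumes fine: "\<forall>I \<gamma>. tfd_curve A D g T I \<gamma> \<longrightarrow> (\<forall>V. openin (top_of_set I) V \<longrightarrow>
      openin (pullback_topology I \<gamma> (alexandrov_topology A D g T)) V)"
  shows "chronological A D g T"
  unfolding chronological_def
proof
  assume "\<exists>p. chron_rel A D g T p p"
  then obtain a b \<gamma> where "a < b" and tfd: "tfd_curve A D g T {a..b} \<gamma>" and "\<gamma> a = \<gamma> b"
    unfolding chron_rel_def by metis
  define V where "V = {a..b} \<inter> {..<(a + b) / 2}"
  have "openin (top_of_set {a..b}) V"
    unfolding V_def by (intro openin_open_Int) auto
  then have "openin (pullback_topology {a..b} \<gamma> (alexandrov_topology A D g T)) V"
    using fine tfd by blast
  then obtain U where U: "V = \<gamma> -` U \<inter> {a..b}"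
    unfolding openin_pullback_topology by blast
  have "a \<in> V"
    using \<open>a < b\<close> by (auto simp: V_def)
  then have "\<gamma> b \<in> U"
    using U \<open>\<gamma> a = \<gamma> b\<close> by auto
  then have "b \<in> V"
    using U \<open>a < b\<close> by auto
  then show False
    using \<open>a < b\<close> by (auto simp: V_def)
qed

theorem theorem3p16:
  fixes A :: "('m::{t2_space, second_countable_topology}, 'e::euclidean_space) chart set"
    and D :: "('m, 'e) chart \<Rightarrow> 'm \<Rightarrow> 'e set"
    and k :: nat
    and g :: "('m, 'e) chart \<Rightarrow> 'm \<Rightarrow> 'e \<Rightarrow> 'e \<Rightarrow> real"
    and T :: "('m, 'e) chart \<Rightarrow> 'm \<Rightarrow> 'e"
  assumes "sub_space_time A D k g T"
  shows "chronological A D g T \<longleftrightarrow>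
    (\<forall>I \<gamma>. tfd_curve A D g T I \<gamma> \<longrightarrow>
       (\<forall>V. openin (top_of_set I) V \<longrightarrow>
            openin (pullback_topology I \<gamma> (alexandrov_topology A D g T)) V))"
proof
  assume "chronological A D g T"
  then show "\<forall>I \<gamma>. tfd_curve A D g T I \<gamma> \<longrightarrow> (\<forall>V. openin (top_of_set I) V \<longrightarrow>
      openin (pullback_topology I \<gamma> (alexandrov_topology A D g T)) V)"
    by (intro allI impI chronological_imp_pullback_finer[OF assms])
next
  assume "\<forall>I \<gamma>. tfd_curve A D g T I \<gamma> \<longrightarrow> (\<forall>V. openin (top_of_set I) V \<longrightarrow>
      openin (pullback_topology I \<gamma> (alexandrov_topology A D g T)) V)"
  then show "chronological A D g T"
    by (rule pullback_finer_imp_chronological)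
qed

end
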